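(* For any $\mathcal R$-dioid $K$ and $n\ge1$, $\mathrm{Mat}_{n\times n}(K)\simeq K\otimes_{\mathcal R}\mathrm{Mat}_{n\times n}(\mathbb B)$.
   Context: An $\mathcal R$-dioid is a dioid in which every regular subset of its multiplicative monoid has a supremum $\sum A$ with $\sum(AB)=(\sum A)(\sum B)$ (equivalently a $*$-continuous Kleene algebra); an $\mathcal R$-morphism is a dioid morphism preserving suprema of regular sets. $\mathrm{Mat}_{n\times n}(K)$ is the ($*$-continuous) Kleene algebra of $n\times n$ matrices over $K$ with matrix sum, product and standard matrix star; $\mathbb B=\{0,1\}$ is the boolean Kleene algebra. For $\mathcal R$-dioids $K_1,K_2$, $K_1\otimes_{\mathcal R}K_2$ is their tensor product: an $\mathcal R$-dioid with $\mathcal R$-morphisms from $K_1$ and $K_2$ whose images commute elementwise, universal in that every pair of elementwise commuting $\mathcal R$-morphisms from $K_1,K_2$ into an $\mathcal R$-dioid factors uniquely through an $\mathcal R$-morphism from the tensor product. *)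

theory Defs
  imports Main
begin

record 'a dioid_struct =
  dcar  :: "'a set"
  dadd  :: "'a \<Rightarrow> 'a \<Rightarrow> 'a"
  dmul  :: "'a \<Rightarrow> 'a \<Rightarrow> 'a"
  dzero :: 'a
  dunit :: 'a

definition is_dioid :: "'a dioid_struct \<Rightarrow> bool" where
  "is_dioid D \<longleftrightarrow>
     dzero D \<in> dcar D \<and> dunit D \<in> dcar D \<and>
     (\<forall>a\<in>dcar D. \<forall>b\<in>dcar D. dadd D a b \<in> dcar D \<and> dmul D a b \<in> dcar D) \<and>
     (\<forall>a\<in>dcar D. \<forall>b\<in>dcar D. \<forall>c\<in>dcar D.
        dadd D (dadd D a b) c = dadd D a (dadd D b c) \<and>
        dmul D (dmul D a b) c = dmul D a (dmul D b c) \<and>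
        dmul D a (dadd D b c) = dadd D (dmul D a b) (dmul D a c) \<and>
        dmul D (dadd D a b) c = dadd D (dmul D a c) (dmul D b c)) \<and>
     (\<forall>a\<in>dcar D. \<forall>b\<in>dcar D. dadd D a b = dadd D b a) \<and>
     (\<forall>a\<in>dcar D. dadd D a a = a \<and> dadd D (dzero D) a = a \<and>
        dmul D (dunit D) a = a \<and> dmul D a (dunit D) = a \<and>
        dmul D (dzero D) a = dzero D \<and> dmul D a (dzero D) = dzero D)"

definition dleq :: "'a dioid_struct \<Rightarrow> 'a \<Rightarrow> 'a \<Rightarrow> bool" where
  "dleq D a b \<longleftrightarrow> dadd D a b = b"

definition setmul :: "'a dioid_struct \<Rightarrow> 'a set \<Rightarrow> 'a set \<Rightarrow> 'a set" where
  "setmul D A B = {dmul D a b | a b. a \<in> A \<and> b \<in> B}"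

primrec setpow :: "'a dioid_struct \<Rightarrow> 'a set \<Rightarrow> nat \<Rightarrow> 'a set" where
  "setpow D A 0 = {dunit D}"
| "setpow D A (Suc k) = setmul D A (setpow D A k)"

definition setstar :: "'a dioid_struct \<Rightarrow> 'a set \<Rightarrow> 'a set" where
  "setstar D A = (\<Union>k. setpow D A k)"

inductive_set regsets :: "'a dioid_struct \<Rightarrow> 'a set set" for D where
  reg_empty: "{} \<in> regsets D"
| reg_single: "a \<in> dcar D \<Longrightarrow> {a} \<in> regsets D"
| reg_union: "A \<in> regsets D \<Longrightarrow> B \<in> regsets D \<Longrightarrow> A \<union> B \<in> regsets D"
| reg_mul: "A \<in> regsets D \<Longrightarrow> B \<in> regsets D \<Longrightarrow> setmul D A B \<in> regsets D"
| reg_star: "A \<in> regsets D \<Longrightarrow> setstar D A \<in> regsets D"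

definition is_sup :: "'a dioid_struct \<Rightarrow> 'a set \<Rightarrow> 'a \<Rightarrow> bool" where
  "is_sup D A s \<longleftrightarrow> s \<in> dcar D \<and> (\<forall>a\<in>A. dleq D a s) \<and>
     (\<forall>u\<in>dcar D. (\<forall>a\<in>A. dleq D a u) \<longrightarrow> dleq D s u)"

definition dsup :: "'a dioid_struct \<Rightarrow> 'a set \<Rightarrow> 'a" where
  "dsup D A = (THE s. is_sup D A s)"

definition R_dioid :: "'a dioid_struct \<Rightarrow> bool" where
  "R_dioid D \<longleftrightarrow> is_dioid D \<and>
     (\<forall>A\<in>regsets D. \<exists>s. is_sup D A s) \<and>
     (\<forall>A\<in>regsets D. \<forall>B\<in>regsets D.
        dsup D (setmul D A B) = dmul D (dsup D A) (dsup D B))"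

definition R_morphism :: "'a dioid_struct \<Rightarrow> 'b dioid_struct \<Rightarrow> ('a \<Rightarrow> 'b) \<Rightarrow> bool" where
  "R_morphism D E f \<longleftrightarrow>
     (\<forall>a\<in>dcar D. f a \<in> dcar E) \<and>
     f (dzero D) = dzero E \<and> f (dunit D) = dunit E \<and>
     (\<forall>a\<in>dcar D. \<forall>b\<in>dcar D. f (dadd D a b) = dadd E (f a) (f b) \<and>
                             f (dmul D a b) = dmul E (f a) (f b)) \<and>
     (\<forall>A\<in>regsets D. f (dsup D A) = dsup E (f ` A))"

text \<open>Tensor product by its universal property: T with maps i1 : K1 \<rightarrow> T, i2 : K2 \<rightarrow> T
  is a tensor product of K1 and K2 w.r.t. R-dioids of type 'c.\<close>
definition is_R_tensor ::
  "'a dioid_struct \<Rightarrow> 'b dioid_struct \<Rightarrow> 't dioid_struct \<Rightarrow> ('a \<Rightarrow> 't) \<Rightarrow> ('b \<Rightarrow> 't)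
     \<Rightarrow> 'c itself \<Rightarrow> bool" where
  "is_R_tensor K1 K2 T i1 i2 (_ :: 'c itself) \<longleftrightarrow>
     R_dioid T \<and> R_morphism K1 T i1 \<and> R_morphism K2 T i2 \<and>
     (\<forall>x\<in>dcar K1. \<forall>y\<in>dcar K2. dmul T (i1 x) (i2 y) = dmul T (i2 y) (i1 x)) \<and>
     (\<forall>(E :: 'c dioid_struct) f g.
        R_dioid E \<and> R_morphism K1 E f \<and> R_morphism K2 E g \<and>
        (\<forall>x\<in>dcar K1. \<forall>y\<in>dcar K2. dmul E (f x) (g y) = dmul E (g y) (f x)) \<longrightarrow>
        (\<exists>h. R_morphism T E h \<and> (\<forall>x\<in>dcar K1. h (i1 x) = f x) \<and>
             (\<forall>y\<in>dcar K2. h (i2 y) = g y) \<and>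
             (\<forall>h'. R_morphism T E h' \<and> (\<forall>x\<in>dcar K1. h' (i1 x) = f x) \<and>
                   (\<forall>y\<in>dcar K2. h' (i2 y) = g y) \<longrightarrow> (\<forall>z\<in>dcar T. h' z = h z))))"

primrec dsum :: "'a dioid_struct \<Rightarrow> (nat \<Rightarrow> 'a) \<Rightarrow> nat \<Rightarrow> 'a" where
  "dsum D f 0 = dzero D"
| "dsum D f (Suc k) = dadd D (dsum D f k) (f k)"

text \<open>n\<times>n matrices over K, represented as functions nat \<Rightarrow> nat \<Rightarrow> 'a that are
  zero outside the index range {0..<n}\<times>{0..<n}.\<close>
definition Mat :: "nat \<Rightarrow> 'a dioid_struct \<Rightarrow> (nat \<Rightarrow> nat \<Rightarrow> 'a) dioid_struct" where
  "Mat n K = \<lparr>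
     dcar = {M. (\<forall>i<n. \<forall>j<n. M i j \<in> dcar K) \<and> (\<forall>i j. \<not> (i < n \<and> j < n) \<longrightarrow> M i j = dzero K)},
     dadd = (\<lambda>M N i j. if i < n \<and> j < n then dadd K (M i j) (N i j) else dzero K),
     dmul = (\<lambda>M N i j. if i < n \<and> j < n then dsum K (\<lambda>k. dmul K (M i k) (N k j)) n else dzero K),
     dzero = (\<lambda>i j. dzero K),
     dunit = (\<lambda>i j. if i = j \<and> i < n then dunit K else dzero K) \<rparr>"

definition Bool_dioid :: "bool dioid_struct" where
  "Bool_dioid = \<lparr> dcar = UNIV, dadd = (\<or>), dmul = (\<and>), dzero = False, dunit = True \<rparr>"

definition scalar_mat :: "nat \<Rightarrow> 'a dioid_struct \<Rightarrow> 'a \<Rightarrow> (nat \<Rightarrow> nat \<Rightarrow> 'a)" where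
  "scalar_mat n K k = (\<lambda>i j. if i = j \<and> i < n then k else dzero K)"

definition bool_mat :: "nat \<Rightarrow> 'a dioid_struct \<Rightarrow> (nat \<Rightarrow> nat \<Rightarrow> bool) \<Rightarrow> (nat \<Rightarrow> nat \<Rightarrow> 'a)" where
  "bool_mat n K M = (\<lambda>i j. if i < n \<and> j < n \<and> M i j then dunit K else dzero K)"

end

theory Submission
  imports Defs
begin

text \<open>
  Every \<open>n \<times> n\<close> matrix over \<open>K\<close> is the sum of the products \<open>M\<^sub>i\<^sub>j e\<^sub>i\<^sub>j\<close> of scalar matrices with
  boolean matrix units, and scalar matrices commute with boolean ones. So the only candidate for
  the factorization of commuting R-morphisms \<open>f\<close> (on \<open>K\<close>) and \<open>g\<close> (on boolean matrices) is
  \<open>h M = \<Sum>\<^sub>i\<^sub>j f(M\<^sub>i\<^sub>j) g(e\<^sub>i\<^sub>j)\<close>, and it is multiplicative because \<open>f\<close> and \<open>g\<close> commute and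
  \<open>e\<^sub>i\<^sub>j e\<^sub>k\<^sub>l = [j = k] e\<^sub>i\<^sub>l\<close>.

  The substance lies in the suprema. By induction on a regular set \<open>A\<close> of matrices, each entry
  \<open>(i, j)\<close> admits a regular set of scalars with the same upper bounds as the \<open>(i, j)\<close>-entries
  of \<open>A\<close>; for a star \<open>A\<^sup>*\<close> it is a set of path labels, regular by Kleene's construction. Hence
  \<open>sup A\<close> exists and is computed entrywise, which makes the matrices an R-dioid and lets \<open>h\<close>
  preserve suprema of regular sets because \<open>f\<close> does.
\<close>

section \<open>Dioids\<close>

locale dioid =
  fixes D :: "'a dioid_struct"
  assumes is_dioid: "is_dioid D"
begin

lemma zero_closed [simp]: "dzero D \<in> dcar D"
  and unit_closed [simp]: "dunit D \<in> dcar D"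
  and add_closed [simp]: "a \<in> dcar D \<Longrightarrow> b \<in> dcar D \<Longrightarrow> dadd D a b \<in> dcar D"
  and mul_closed [simp]: "a \<in> dcar D \<Longrightarrow> b \<in> dcar D \<Longrightarrow> dmul D a b \<in> dcar D"
  using is_dioid unfolding is_dioid_def by blast+

lemma add_assoc: "a \<in> dcar D \<Longrightarrow> b \<in> dcar D \<Longrightarrow> c \<in> dcar D \<Longrightarrow>
    dadd D (dadd D a b) c = dadd D a (dadd D b c)"
  and mul_assoc: "a \<in> dcar D \<Longrightarrow> b \<in> dcar D \<Longrightarrow> c \<in> dcar D \<Longrightarrow>
    dmul D (dmul D a b) c = dmul D a (dmul D b c)"
  and distrib_left: "a \<in> dcar D \<Longrightarrow> b \<in> dcar D \<Longrightarrow> c \<in> dcar D \<Longrightarrow>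
    dmul D a (dadd D b c) = dadd D (dmul D a b) (dmul D a c)"
  and distrib_right: "a \<in> dcar D \<Longrightarrow> b \<in> dcar D \<Longrightarrow> c \<in> dcar D \<Longrightarrow>
    dmul D (dadd D a b) c = dadd D (dmul D a c) (dmul D b c)"
  and add_commute: "a \<in> dcar D \<Longrightarrow> b \<in> dcar D \<Longrightarrow> dadd D a b = dadd D b a"
  using is_dioid unfolding is_dioid_def by blast+

lemma add_idem [simp]: "a \<in> dcar D \<Longrightarrow> dadd D a a = a"
  and add_zero_left [simp]: "a \<in> dcar D \<Longrightarrow> dadd D (dzero D) a = a"
  and mul_unit_left [simp]: "a \<in> dcar D \<Longrightarrow> dmul D (dunit D) a = a"
  and mul_unit_right [simp]: "a \<in> dcar D \<Longrightarrow> dmul D a (dunit D) = a"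
  and mul_zero_left [simp]: "a \<in> dcar D \<Longrightarrow> dmul D (dzero D) a = dzero D"
  and mul_zero_right [simp]: "a \<in> dcar D \<Longrightarrow> dmul D a (dzero D) = dzero D"
  using is_dioid unfolding is_dioid_def by blast+

lemma add_zero_right [simp]: "a \<in> dcar D \<Longrightarrow> dadd D a (dzero D) = a"
  using add_commute add_zero_left zero_closed by metis

lemma add_left_commute: "a \<in> dcar D \<Longrightarrow> b \<in> dcar D \<Longrightarrow> c \<in> dcar D \<Longrightarrow>
    dadd D a (dadd D b c) = dadd D b (dadd D a c)"
proof -
  assume abc: "a \<in> dcar D" "b \<in> dcar D" "c \<in> dcar D"
  then have "dadd D a (dadd D b c) = dadd D (dadd D a b) c" by (simp add: add_assoc)
  also have "\<dots> = dadd D (dadd D b a) c" using abc add_commute[of a b] by simp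
  finally show ?thesis using abc by (simp add: add_assoc)
qed

lemma add_add_swap: "a \<in> dcar D \<Longrightarrow> b \<in> dcar D \<Longrightarrow> c \<in> dcar D \<Longrightarrow> d \<in> dcar D \<Longrightarrow>
    dadd D (dadd D a b) (dadd D c d) = dadd D (dadd D a c) (dadd D b d)"
  by (simp add: add_assoc add_left_commute)

abbreviation le :: "'a \<Rightarrow> 'a \<Rightarrow> bool" where
  "le \<equiv> dleq D"

lemma le_refl [simp]: "a \<in> dcar D \<Longrightarrow> le a a"
  unfolding dleq_def by simp

lemma le_trans:
  assumes "a \<in> dcar D" "b \<in> dcar D" "c \<in> dcar D" "le a b" "le b c"
  shows "le a c"
proof -
  have "dadd D a c = dadd D a (dadd D b c)" using assms(5) by (simp add: dleq_def)
  also have "\<dots> = dadd D (dadd D a b) c" using assms(1-3) by (simp add: add_assoc)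
  also have "\<dots> = c" using assms(4,5) by (simp add: dleq_def)
  finally show ?thesis unfolding dleq_def .
qed

lemma le_antisym: "a \<in> dcar D \<Longrightarrow> b \<in> dcar D \<Longrightarrow> le a b \<Longrightarrow> le b a \<Longrightarrow> a = b"
  unfolding dleq_def using add_commute[of a b] by simp

lemma le_add1: "a \<in> dcar D \<Longrightarrow> b \<in> dcar D \<Longrightarrow> le a (dadd D a b)"
  unfolding dleq_def by (simp flip: add_assoc)

lemma le_add2: "a \<in> dcar D \<Longrightarrow> b \<in> dcar D \<Longrightarrow> le b (dadd D a b)"
  using add_commute[of a b] le_add1[of b a] by simp

lemma add_least: "a \<in> dcar D \<Longrightarrow> b \<in> dcar D \<Longrightarrow> c \<in> dcar D \<Longrightarrow> le a c \<Longrightarrow> le b c \<Longrightarrow>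
    le (dadd D a b) c"
  unfolding dleq_def by (simp add: add_assoc)

lemma zero_le [simp]: "a \<in> dcar D \<Longrightarrow> le (dzero D) a"
  unfolding dleq_def by simp

lemma add_mono: "a \<in> dcar D \<Longrightarrow> b \<in> dcar D \<Longrightarrow> c \<in> dcar D \<Longrightarrow> d \<in> dcar D \<Longrightarrow>
    le a c \<Longrightarrow> le b d \<Longrightarrow> le (dadd D a b) (dadd D c d)"
  unfolding dleq_def using add_add_swap[of a b c d] by simp

lemma mul_mono_left: "a \<in> dcar D \<Longrightarrow> b \<in> dcar D \<Longrightarrow> c \<in> dcar D \<Longrightarrow> le a b \<Longrightarrow>
    le (dmul D c a) (dmul D c b)"
  unfolding dleq_def by (metis distrib_left)

lemma mul_mono_right: "a \<in> dcar D \<Longrightarrow> b \<in> dcar D \<Longrightarrow> c \<in> dcar D \<Longrightarrow> le a b \<Longrightarrow>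
    le (dmul D a c) (dmul D b c)"
  unfolding dleq_def by (metis distrib_right)

lemma mul_mono: "a \<in> dcar D \<Longrightarrow> b \<in> dcar D \<Longrightarrow> c \<in> dcar D \<Longrightarrow> d \<in> dcar D \<Longrightarrow>
    le a c \<Longrightarrow> le b d \<Longrightarrow> le (dmul D a b) (dmul D c d)"
  using le_trans[OF _ _ _ mul_mono_right[of a c b] mul_mono_left[of b d c]] by simp

lemma is_sup_closed: "is_sup D A s \<Longrightarrow> s \<in> dcar D"
  and is_sup_upper: "is_sup D A s \<Longrightarrow> a \<in> A \<Longrightarrow> le a s"
  and is_sup_least: "is_sup D A s \<Longrightarrow> u \<in> dcar D \<Longrightarrow> (\<And>a. a \<in> A \<Longrightarrow> le a u) \<Longrightarrow> le s u"
  unfolding is_sup_def by blast+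

lemma is_supI:
  "s \<in> dcar D \<Longrightarrow> (\<And>a. a \<in> A \<Longrightarrow> le a s) \<Longrightarrow>
    (\<And>u. u \<in> dcar D \<Longrightarrow> (\<And>a. a \<in> A \<Longrightarrow> le a u) \<Longrightarrow> le s u) \<Longrightarrow> is_sup D A s"
  unfolding is_sup_def by blast

lemma is_sup_unique: "is_sup D A s \<Longrightarrow> is_sup D A t \<Longrightarrow> s = t"
  unfolding is_sup_def using le_antisym by blast

lemma dsup_eqI: "is_sup D A s \<Longrightarrow> dsup D A = s"
  unfolding dsup_def using is_sup_unique by blast

lemma is_sup_mono: "A \<subseteq> B \<Longrightarrow> is_sup D A a \<Longrightarrow> is_sup D B b \<Longrightarrow> le a b"
  unfolding is_sup_def by blast

lemma is_sup_singleton: "a \<in> dcar D \<Longrightarrow> is_sup D {a} a"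
  by (rule is_supI) auto

lemma is_sup_subset_zero: "A \<subseteq> {dzero D} \<Longrightarrow> is_sup D A (dzero D)"
  by (rule is_supI) auto

lemma is_sup_indicator_image:
  "is_sup D ((\<lambda>x. if P x then dunit D else dzero D) ` A) (if \<exists>x\<in>A. P x then dunit D else dzero D)"
  by (rule is_supI) auto

lemma is_sup_Un:
  assumes "A \<subseteq> dcar D" "B \<subseteq> dcar D" "is_sup D A a" "is_sup D B b"
  shows "is_sup D (A \<union> B) (dadd D a b)"
proof (rule is_supI)
  have a: "a \<in> dcar D" and b: "b \<in> dcar D"
    using assms(3,4) by (auto intro: is_sup_closed)
  then show "dadd D a b \<in> dcar D" by simp
  show "le x (dadd D a b)" if x: "x \<in> A \<union> B" for x
  proof (cases "x \<in> A")
    case True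
    with assms(3) have "le x a" by (rule is_sup_upper)
    moreover have "le a (dadd D a b)" using a b by (rule le_add1)
    moreover have "x \<in> dcar D" using True assms(1) by blast
    ultimately show ?thesis using a b le_trans[of x a "dadd D a b"] by simp
  next
    case False
    then have "x \<in> B" using x by blast
    moreover from assms(4) this have "le x b" by (rule is_sup_upper)
    moreover have "le b (dadd D a b)" using a b by (rule le_add2)
    moreover have "x \<in> dcar D" using \<open>x \<in> B\<close> assms(2) by blast
    ultimately show ?thesis using a b le_trans[of x b "dadd D a b"] by simp
  qed
  show "le (dadd D a b) u" if u: "u \<in> dcar D" "\<And>x. x \<in> A \<union> B \<Longrightarrow> le x u" for u
  proof (rule add_least[OF a b u(1)])
    show "le a u" using assms(3) u(1) by (rule is_sup_least) (simp add: u(2))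
    show "le b u" using assms(4) u(1) by (rule is_sup_least) (simp add: u(2))
  qed
qed

lemma is_sup_cofinal:
  assumes "is_sup D R s" "X \<subseteq> dcar D" "R \<subseteq> dcar D"
    and "\<And>r. r \<in> R \<Longrightarrow> \<exists>x\<in>X. le r x" and "\<And>x. x \<in> X \<Longrightarrow> le x s"
  shows "is_sup D X s"
proof (rule is_supI)
  show "s \<in> dcar D" using assms(1) by (rule is_sup_closed)
  show "le s u" if "u \<in> dcar D" "\<And>x. x \<in> X \<Longrightarrow> le x u" for u
    using assms(1) that(1)
  proof (rule is_sup_least)
    fix r assume "r \<in> R"
    with assms(4) obtain x where x: "x \<in> X" "le r x" by blast
    have "r \<in> dcar D" "x \<in> dcar D" using \<open>r \<in> R\<close> x(1) assms(2,3) by blast+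
    then show "le r u" using le_trans[of r x u] x(2) that(1) that(2)[OF x(1)] by simp
  qed
qed (use assms(5) in blast)

lemma dsum_closed [simp]: "(\<And>k. k < m \<Longrightarrow> f k \<in> dcar D) \<Longrightarrow> dsum D f m \<in> dcar D"
  by (induction m) auto

lemma dsum_cong: "(\<And>k. k < m \<Longrightarrow> f k = g k) \<Longrightarrow> dsum D f m = dsum D g m"
  by (induction m) auto

lemma dsum_zero [simp]: "dsum D (\<lambda>k. dzero D) m = dzero D"
  by (induction m) auto

lemma dsum_add: "(\<And>k. k < m \<Longrightarrow> f k \<in> dcar D) \<Longrightarrow> (\<And>k. k < m \<Longrightarrow> g k \<in> dcar D) \<Longrightarrow>
    dsum D (\<lambda>k. dadd D (f k) (g k)) m = dadd D (dsum D f m) (dsum D g m)"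
proof (induction m)
  case (Suc m)
  then show ?case using add_add_swap[of "dsum D f m" "dsum D g m" "f m" "g m"] by simp
qed simp

lemma dsum_mul_left: "a \<in> dcar D \<Longrightarrow> (\<And>k. k < m \<Longrightarrow> f k \<in> dcar D) \<Longrightarrow>
    dmul D a (dsum D f m) = dsum D (\<lambda>k. dmul D a (f k)) m"
  by (induction m) (auto simp: distrib_left)

lemma dsum_mul_right: "a \<in> dcar D \<Longrightarrow> (\<And>k. k < m \<Longrightarrow> f k \<in> dcar D) \<Longrightarrow>
    dmul D (dsum D f m) a = dsum D (\<lambda>k. dmul D (f k) a) m"
  by (induction m) (auto simp: distrib_right)

lemma dsum_swap: "(\<And>i j. i < m1 \<Longrightarrow> j < m2 \<Longrightarrow> f i j \<in> dcar D) \<Longrightarrow>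
    dsum D (\<lambda>i. dsum D (f i) m2) m1 = dsum D (\<lambda>j. dsum D (\<lambda>i. f i j) m1) m2"
proof (induction m1)
  case (Suc m1)
  have "dsum D (\<lambda>i. dsum D (f i) m2) (Suc m1) =
      dadd D (dsum D (\<lambda>j. dsum D (\<lambda>i. f i j) m1) m2) (dsum D (f m1) m2)"
    using Suc by simp
  also have "\<dots> = dsum D (\<lambda>j. dadd D (dsum D (\<lambda>i. f i j) m1) (f m1 j)) m2"
    using Suc.prems by (subst dsum_add) auto
  finally show ?case by simp
qed simp

lemma dsum_mul_dsum:
  assumes "\<And>i. i < m \<Longrightarrow> f i \<in> dcar D" and "\<And>k. k < m' \<Longrightarrow> g k \<in> dcar D"
  shows "dmul D (dsum D f m) (dsum D g m') = dsum D (\<lambda>i. dsum D (\<lambda>k. dmul D (f i) (g k)) m') m"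
proof -
  have "dmul D (dsum D f m) (dsum D g m') = dsum D (\<lambda>i. dmul D (f i) (dsum D g m')) m"
    using assms by (intro dsum_mul_right) auto
  also have "\<dots> = dsum D (\<lambda>i. dsum D (\<lambda>k. dmul D (f i) (g k)) m') m"
    using assms by (intro dsum_cong dsum_mul_left) auto
  finally show ?thesis .
qed

lemma dsum_delta: "(\<And>k. k < m \<Longrightarrow> f k \<in> dcar D) \<Longrightarrow>
    dsum D (\<lambda>k. if k = j then f k else dzero D) m = (if j < m then f j else dzero D)"
  by (induction m) auto

lemma dsum_delta': "(\<And>k. k < m \<Longrightarrow> f k \<in> dcar D) \<Longrightarrow>
    dsum D (\<lambda>k. if j = k then f k else dzero D) m = (if j < m then f j else dzero D)"
  using dsum_delta[of m f j] by (simp add: eq_commute)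

lemma dsum_indicator: "dsum D (\<lambda>k. if P k then dunit D else dzero D) m =
    (if \<exists>k<m. P k then dunit D else dzero D)"
  by (induction m) (auto simp: less_Suc_eq)

lemma dsum_upper: "(\<And>k. k < m \<Longrightarrow> f k \<in> dcar D) \<Longrightarrow> k < m \<Longrightarrow> le (f k) (dsum D f m)"
proof (induction m)
  case (Suc m)
  show ?case
  proof (cases "k = m")
    case True
    then show ?thesis using Suc.prems by (simp add: le_add2)
  next
    case False
    then have "le (f k) (dsum D f m)" using Suc by auto
    then show ?thesis
      using Suc.prems le_trans[OF _ _ _ _ le_add1, of "f k" "dsum D f m" "f m"] by simp
  qed
qed simp

lemma dsum_least: "(\<And>k. k < m \<Longrightarrow> f k \<in> dcar D) \<Longrightarrow> u \<in> dcar D \<Longrightarrow>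
    (\<And>k. k < m \<Longrightarrow> le (f k) u) \<Longrightarrow> le (dsum D f m) u"
  by (induction m) (auto intro: add_least)

lemma dsum_mono: "(\<And>k. k < m \<Longrightarrow> f k \<in> dcar D) \<Longrightarrow> (\<And>k. k < m \<Longrightarrow> g k \<in> dcar D) \<Longrightarrow>
    (\<And>k. k < m \<Longrightarrow> le (f k) (g k)) \<Longrightarrow> le (dsum D f m) (dsum D g m)"
  by (induction m) (auto intro: add_mono)

lemma is_sup_UN_lessThan: "(\<And>k. k < m \<Longrightarrow> X k \<subseteq> dcar D) \<Longrightarrow>
    (\<And>k. k < m \<Longrightarrow> is_sup D (X k) (s k)) \<Longrightarrow> is_sup D (\<Union>k<m. X k) (dsum D s m)"
proof (induction m)
  case (Suc m)
  have "(\<Union>k<Suc m. X k) = (\<Union>k<m. X k) \<union> X m" by (auto simp: less_Suc_eq)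
  moreover have "(\<Union>k<m. X k) \<subseteq> dcar D" using Suc.prems(1) by (meson UN_least lessThan_iff less_SucI)
  ultimately show ?case using Suc is_sup_Un[of "\<Union>k<m. X k" "X m"] by simp
qed (simp add: is_sup_subset_zero)

lemma setmul_iff: "z \<in> setmul D A B \<longleftrightarrow> (\<exists>a b. z = dmul D a b \<and> a \<in> A \<and> b \<in> B)"
  unfolding setmul_def by blast

lemma setmul_closed: "A \<subseteq> dcar D \<Longrightarrow> B \<subseteq> dcar D \<Longrightarrow> setmul D A B \<subseteq> dcar D"
  unfolding setmul_def by (auto simp: subset_iff)

lemma setpow_closed: "A \<subseteq> dcar D \<Longrightarrow> setpow D A k \<subseteq> dcar D"
  by (induction k) (auto intro: setmul_closed[THEN subsetD])

lemma setstar_closed: "A \<subseteq> dcar D \<Longrightarrow> setstar D A \<subseteq> dcar D"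
  unfolding setstar_def using setpow_closed by blast

lemma regsets_closed: "X \<in> regsets D \<Longrightarrow> X \<subseteq> dcar D"
  by (induction rule: regsets.induct)
    (auto intro: setmul_closed[THEN subsetD] setstar_closed[THEN subsetD])

lemma regsets_UN_lessThan: "(\<And>k. k < (m::nat) \<Longrightarrow> X k \<in> regsets D) \<Longrightarrow> (\<Union>k<m. X k) \<in> regsets D"
proof (induction m)
  case (Suc m)
  have "(\<Union>k<Suc m. X k) = (\<Union>k<m. X k) \<union> X m" by (auto simp: less_Suc_eq)
  then show ?case using Suc by (simp add: reg_union)
qed (simp add: reg_empty)

lemma setmul_mono: "A \<subseteq> A' \<Longrightarrow> B \<subseteq> B' \<Longrightarrow> setmul D A B \<subseteq> setmul D A' B'"
  unfolding setmul_def by blast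

lemma setmul_assoc: "A \<subseteq> dcar D \<Longrightarrow> B \<subseteq> dcar D \<Longrightarrow> C \<subseteq> dcar D \<Longrightarrow>
    setmul D (setmul D A B) C = setmul D A (setmul D B C)"
proof -
  assume "A \<subseteq> dcar D" "B \<subseteq> dcar D" "C \<subseteq> dcar D"
  then have "\<And>a b c. a \<in> A \<Longrightarrow> b \<in> B \<Longrightarrow> c \<in> C \<Longrightarrow> dmul D (dmul D a b) c = dmul D a (dmul D b c)"
    by (blast intro: mul_assoc)
  then show ?thesis unfolding setmul_def by (auto 0 3) metis+
qed

lemma setmul_unit_left: "A \<subseteq> dcar D \<Longrightarrow> setmul D {dunit D} A = A"
  unfolding setmul_def by force

lemma setmul_unit_right: "A \<subseteq> dcar D \<Longrightarrow> setmul D A {dunit D} = A"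
  unfolding setmul_def by force

lemma setpow_subset_setstar: "setpow D A k \<subseteq> setstar D A"
  unfolding setstar_def by blast

lemma unit_in_setstar: "dunit D \<in> setstar D A"
  using setpow_subset_setstar[of A 0] by auto

lemma setpow_one: "A \<subseteq> dcar D \<Longrightarrow> setpow D A (Suc 0) = A"
  by (simp add: setmul_unit_right)

lemma setmul_setstar_subset: "setmul D A (setstar D A) \<subseteq> setstar D A"
proof
  fix z assume "z \<in> setmul D A (setstar D A)"
  then obtain k where "z \<in> setmul D A (setpow D A k)"
    unfolding setstar_def setmul_def by blast
  then show "z \<in> setstar D A"
    using setpow_subset_setstar[of A "Suc k"] by auto
qed

subsection \<open>Kleene's construction\<close>

text \<open>Read \<open>R i j\<close> as the labels of an edge from \<open>i\<close> to \<open>j\<close>; then \<open>path_set R i xs j\<close> holds the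
  labels of the path from \<open>i\<close> to \<open>j\<close> through the intermediate vertices \<open>xs\<close>.\<close>

primrec path_set :: "(nat \<Rightarrow> nat \<Rightarrow> 'a set) \<Rightarrow> nat \<Rightarrow> nat list \<Rightarrow> nat \<Rightarrow> 'a set" where
  "path_set R i [] j = R i j"
| "path_set R i (x # xs) j = setmul D (R i x) (path_set R x xs j)"

definition paths_via :: "(nat \<Rightarrow> nat \<Rightarrow> 'a set) \<Rightarrow> nat set \<Rightarrow> nat \<Rightarrow> nat \<Rightarrow> 'a set" where
  "paths_via R V i j = (\<Union>xs\<in>{xs. set xs \<subseteq> V}. path_set R i xs j)"

lemma paths_via_empty: "paths_via R {} i j = R i j"
  unfolding paths_via_def by simp

lemma paths_via_mono: "V \<subseteq> W \<Longrightarrow> paths_via R V i j \<subseteq> paths_via R W i j"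
  unfolding paths_via_def by blast

lemma path_set_subset_paths_via: "set xs \<subseteq> V \<Longrightarrow> path_set R i xs j \<subseteq> paths_via R V i j"
  unfolding paths_via_def by blast

context
  fixes R :: "nat \<Rightarrow> nat \<Rightarrow> 'a set"
  assumes R_closed: "\<And>i j. R i j \<subseteq> dcar D"
begin

lemma path_set_closed: "path_set R i xs j \<subseteq> dcar D"
  by (induction xs arbitrary: i) (simp_all add: R_closed setmul_closed)

lemma path_set_append:
  "path_set R i (xs @ v # ys) j = setmul D (path_set R i xs v) (path_set R v ys j)"
proof (induction xs arbitrary: i)
  case (Cons x xs)
  then show ?case by (simp add: setmul_assoc R_closed path_set_closed)
qed simp

lemma paths_via_closed: "paths_via R V i j \<subseteq> dcar D"
  unfolding paths_via_def using path_set_closed by blast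

lemma setmul_paths_via_subset:
  "v \<in> W \<Longrightarrow> setmul D (paths_via R W i v) (paths_via R W v j) \<subseteq> paths_via R W i j"
proof
  fix z assume v: "v \<in> W" and "z \<in> setmul D (paths_via R W i v) (paths_via R W v j)"
  then obtain a b xs ys where z: "z = dmul D a b" and a: "a \<in> path_set R i xs v"
    and b: "b \<in> path_set R v ys j" and xs: "set xs \<subseteq> W" and ys: "set ys \<subseteq> W"
    unfolding setmul_iff paths_via_def by blast
  have "z \<in> path_set R i (xs @ v # ys) j"
    unfolding path_set_append setmul_iff using z a b by blast
  moreover have "set (xs @ v # ys) \<subseteq> W" using xs ys v by auto
  ultimately show "z \<in> paths_via R W i j" unfolding paths_via_def by blast
qed

lemma setmul_setstar_paths_via_subset:
  "setmul D (setstar D (paths_via R V v v)) (paths_via R V v j) \<subseteq> paths_via R (insert v V) v j"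
proof -
  let ?L = "paths_via R V v v" and ?P = "paths_via R V v j"
  have "setmul D (setpow D ?L k) ?P \<subseteq> paths_via R (insert v V) v j" for k
  proof (induction k)
    case 0
    then show ?case
      using paths_via_mono[of V "insert v V" R] by (auto simp: setmul_unit_left paths_via_closed)
  next
    case (Suc k)
    have "setmul D (setpow D ?L (Suc k)) ?P = setmul D ?L (setmul D (setpow D ?L k) ?P)"
      by (simp add: setmul_assoc paths_via_closed setpow_closed)
    also have "\<dots> \<subseteq> setmul D (paths_via R (insert v V) v v) (paths_via R (insert v V) v j)"
      by (intro setmul_mono Suc paths_via_mono) auto
    also have "\<dots> \<subseteq> paths_via R (insert v V) v j" by (intro setmul_paths_via_subset) auto
    finally show ?case .
  qed
  then show ?thesis unfolding setstar_def setmul_def by blast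
qed

text \<open>A path from \<open>v\<close> through \<open>insert v V\<close> splits at its visits to \<open>v\<close> into cycles at \<open>v\<close>
  through \<open>V\<close>, followed by a path through \<open>V\<close>.\<close>
lemma path_set_subset_setmul_setstar:
  "set zs \<subseteq> insert v V \<Longrightarrow>
    path_set R v zs j \<subseteq> setmul D (setstar D (paths_via R V v v)) (paths_via R V v j)"
proof (induction "length zs" arbitrary: zs rule: less_induct)
  case less
  let ?L = "paths_via R V v v" and ?P = "paths_via R V v j"
  show ?case
  proof (cases "v \<in> set zs")
    case False
    then have "path_set R v zs j \<subseteq> ?P"
      using less.prems by (intro path_set_subset_paths_via) auto
    also have "\<dots> = setmul D {dunit D} ?P" by (simp add: setmul_unit_left paths_via_closed)
    also have "\<dots> \<subseteq> setmul D (setstar D ?L) ?P"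
      by (intro setmul_mono) (auto simp: unit_in_setstar)
    finally show ?thesis .
  next
    case True
    then obtain ys ws where zs: "zs = ys @ v # ws" and ys: "v \<notin> set ys"
      by (meson split_list_first)
    have "path_set R v zs j = setmul D (path_set R v ys v) (path_set R v ws j)"
      by (simp add: zs path_set_append)
    also have "\<dots> \<subseteq> setmul D ?L (setmul D (setstar D ?L) ?P)"
    proof (intro setmul_mono)
      show "path_set R v ys v \<subseteq> ?L"
        using less.prems ys zs by (intro path_set_subset_paths_via) auto
      show "path_set R v ws j \<subseteq> setmul D (setstar D ?L) ?P"
        using less.prems zs by (intro less.hyps) auto
    qed
    also have "\<dots> = setmul D (setmul D ?L (setstar D ?L)) ?P"
      by (simp add: setmul_assoc paths_via_closed setstar_closed)
    also have "\<dots> \<subseteq> setmul D (setstar D ?L) ?P"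
      by (intro setmul_mono setmul_setstar_subset) auto
    finally show ?thesis .
  qed
qed

lemma paths_via_insert: "paths_via R (insert v V) i j =
    paths_via R V i j \<union>
      setmul D (paths_via R V i v) (setmul D (setstar D (paths_via R V v v)) (paths_via R V v j))"
    (is "_ = _ \<union> ?S")
proof
  show "paths_via R (insert v V) i j \<subseteq> paths_via R V i j \<union> ?S"
  proof
    fix z assume "z \<in> paths_via R (insert v V) i j"
    then obtain xs where z: "z \<in> path_set R i xs j" and xs: "set xs \<subseteq> insert v V"
      unfolding paths_via_def by blast
    show "z \<in> paths_via R V i j \<union> ?S"
    proof (cases "v \<in> set xs")
      case False
      then show ?thesis using z xs unfolding paths_via_def by blast
    next
      case True
      then obtain ys zs where xs_split: "xs = ys @ v # zs" and ys: "v \<notin> set ys"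
        by (meson split_list_first)
      have "path_set R i xs j \<subseteq> ?S"
        unfolding xs_split path_set_append
      proof (intro setmul_mono)
        show "path_set R i ys v \<subseteq> paths_via R V i v"
          using xs ys xs_split by (intro path_set_subset_paths_via) auto
        show "path_set R v zs j \<subseteq> setmul D (setstar D (paths_via R V v v)) (paths_via R V v j)"
          using xs xs_split by (intro path_set_subset_setmul_setstar) auto
      qed
      then show ?thesis using z by blast
    qed
  qed
  have "?S \<subseteq> setmul D (paths_via R (insert v V) i v) (paths_via R (insert v V) v j)"
    by (intro setmul_mono setmul_setstar_paths_via_subset paths_via_mono) auto
  also have "\<dots> \<subseteq> paths_via R (insert v V) i j" by (intro setmul_paths_via_subset) auto
  finally show "paths_via R V i j \<union> ?S \<subseteq> paths_via R (insert v V) i j"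
    using paths_via_mono[of V "insert v V" R i j] by blast
qed

lemma paths_via_regular: "finite V \<Longrightarrow> (\<And>i j. R i j \<in> regsets D) \<Longrightarrow> paths_via R V i j \<in> regsets D"
proof (induction V arbitrary: i j rule: finite_induct)
  case empty
  then show ?case by (simp add: paths_via_empty)
next
  case (insert v V)
  then have "\<And>a b. paths_via R V a b \<in> regsets D" by blast
  then show ?case unfolding paths_via_insert by (intro reg_union reg_mul reg_star)
qed

end

end

locale r_dioid = dioid +
  assumes R_dioid: "R_dioid D"
begin

lemma is_sup_dsup: "A \<in> regsets D \<Longrightarrow> is_sup D A (dsup D A)"
  using R_dioid dsup_eqI unfolding R_dioid_def by metis

lemma dsup_closed: "A \<in> regsets D \<Longrightarrow> dsup D A \<in> dcar D"
  using is_sup_dsup is_sup_closed by blast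

lemma dsup_setmul: "A \<in> regsets D \<Longrightarrow> B \<in> regsets D \<Longrightarrow>
    dsup D (setmul D A B) = dmul D (dsup D A) (dsup D B)"
  using R_dioid unfolding R_dioid_def by blast

end

lemma r_dioidI: "R_dioid D \<Longrightarrow> r_dioid D"
  by (simp add: r_dioid_def dioid_def r_dioid_axioms_def R_dioid_def)

section \<open>Matrices\<close>

lemma Mat_simps:
  "dcar (Mat n K) =
    {M. (\<forall>i<n. \<forall>j<n. M i j \<in> dcar K) \<and> (\<forall>i j. \<not> (i < n \<and> j < n) \<longrightarrow> M i j = dzero K)}"
  "dadd (Mat n K) M N = (\<lambda>i j. if i < n \<and> j < n then dadd K (M i j) (N i j) else dzero K)"
  "dmul (Mat n K) M N =
    (\<lambda>i j. if i < n \<and> j < n then dsum K (\<lambda>k. dmul K (M i k) (N k j)) n else dzero K)"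
  "dzero (Mat n K) = (\<lambda>i j. dzero K)"
  "dunit (Mat n K) = (\<lambda>i j. if i = j \<and> i < n then dunit K else dzero K)"
  by (simp_all add: Mat_def)

lemma Mat_entry_closed: "M \<in> dcar (Mat n K) \<Longrightarrow> i < n \<Longrightarrow> j < n \<Longrightarrow> M i j \<in> dcar K"
  and Mat_entry_zero: "M \<in> dcar (Mat n K) \<Longrightarrow> \<not> (i < n \<and> j < n) \<Longrightarrow> M i j = dzero K"
  by (simp_all add: Mat_simps)

lemma Mat_memI: "(\<And>i j. i < n \<Longrightarrow> j < n \<Longrightarrow> M i j \<in> dcar K) \<Longrightarrow>
    (\<And>i j. \<not> (i < n \<and> j < n) \<Longrightarrow> M i j = dzero K) \<Longrightarrow> M \<in> dcar (Mat n K)"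
  by (simp add: Mat_simps)

lemma Mat_eqI: "M \<in> dcar (Mat n K) \<Longrightarrow> N \<in> dcar (Mat n K) \<Longrightarrow>
    (\<And>i j. i < n \<Longrightarrow> j < n \<Longrightarrow> M i j = N i j) \<Longrightarrow> M = N"
  by (intro ext) (metis Mat_entry_zero)

lemma Mat_add_entry: "i < n \<Longrightarrow> j < n \<Longrightarrow> dadd (Mat n K) M N i j = dadd K (M i j) (N i j)"
  and Mat_mul_entry: "i < n \<Longrightarrow> j < n \<Longrightarrow>
    dmul (Mat n K) M N i j = dsum K (\<lambda>k. dmul K (M i k) (N k j)) n"
  and Mat_unit_entry: "dunit (Mat n K) i j = (if i = j \<and> i < n then dunit K else dzero K)"
  and Mat_zero_entry: "dzero (Mat n K) i j = dzero K"
  by (simp_all add: Mat_simps)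

lemma Mat_dsum_entry:
  "dsum (Mat n K) F m i j = (if i < n \<and> j < n then dsum K (\<lambda>k. F k i j) m else dzero K)"
  by (induction m) (auto simp: Mat_simps)

context dioid
begin

lemma Mat_add_closed:
  "M \<in> dcar (Mat n D) \<Longrightarrow> N \<in> dcar (Mat n D) \<Longrightarrow> dadd (Mat n D) M N \<in> dcar (Mat n D)"
  by (simp add: Mat_simps)

lemma Mat_mul_closed:
  "M \<in> dcar (Mat n D) \<Longrightarrow> N \<in> dcar (Mat n D) \<Longrightarrow> dmul (Mat n D) M N \<in> dcar (Mat n D)"
  by (intro Mat_memI) (auto simp: Mat_simps)

lemma Mat_mul_assoc:
  assumes M: "M \<in> dcar (Mat n D)" and N: "N \<in> dcar (Mat n D)" and P: "P \<in> dcar (Mat n D)"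
  shows "dmul (Mat n D) (dmul (Mat n D) M N) P = dmul (Mat n D) M (dmul (Mat n D) N P)"
proof (rule Mat_eqI)
  show "dmul (Mat n D) (dmul (Mat n D) M N) P \<in> dcar (Mat n D)"
    and "dmul (Mat n D) M (dmul (Mat n D) N P) \<in> dcar (Mat n D)"
    using M N P by (simp_all add: Mat_mul_closed)
  fix i j assume ij: "i < n" "j < n"
  have c: "\<And>a b. a < n \<Longrightarrow> b < n \<Longrightarrow> M a b \<in> dcar D \<and> N a b \<in> dcar D \<and> P a b \<in> dcar D"
    using M N P by (simp add: Mat_entry_closed)
  have "dmul (Mat n D) (dmul (Mat n D) M N) P i j
      = dsum D (\<lambda>l. dsum D (\<lambda>k. dmul D (dmul D (M i k) (N k l)) (P l j)) n) n"
    using ij c by (simp add: Mat_mul_entry dsum_mul_right cong: dsum_cong)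
  also have "\<dots> = dsum D (\<lambda>k. dsum D (\<lambda>l. dmul D (M i k) (dmul D (N k l) (P l j))) n) n"
    using ij c by (subst dsum_swap) (auto simp: mul_assoc intro!: dsum_cong)
  also have "\<dots> = dmul (Mat n D) M (dmul (Mat n D) N P) i j"
    using ij c by (simp add: Mat_mul_entry dsum_mul_left cong: dsum_cong)
  finally show "dmul (Mat n D) (dmul (Mat n D) M N) P i j =
      dmul (Mat n D) M (dmul (Mat n D) N P) i j" .
qed

lemma Mat_distrib_left:
  assumes M: "M \<in> dcar (Mat n D)" and N: "N \<in> dcar (Mat n D)" and P: "P \<in> dcar (Mat n D)"
  shows "dmul (Mat n D) M (dadd (Mat n D) N P) =
    dadd (Mat n D) (dmul (Mat n D) M N) (dmul (Mat n D) M P)"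
proof (rule Mat_eqI[where n = n and K = D])
  show "dmul (Mat n D) M (dadd (Mat n D) N P) \<in> dcar (Mat n D)"
    and "dadd (Mat n D) (dmul (Mat n D) M N) (dmul (Mat n D) M P) \<in> dcar (Mat n D)"
    using assms by (simp_all add: Mat_mul_closed Mat_add_closed)
  fix i j assume ij: "i < n" "j < n"
  have c: "\<And>a b. a < n \<Longrightarrow> b < n \<Longrightarrow> M a b \<in> dcar D \<and> N a b \<in> dcar D \<and> P a b \<in> dcar D"
    using assms by (simp add: Mat_entry_closed)
  have "dmul (Mat n D) M (dadd (Mat n D) N P) i j
      = dsum D (\<lambda>k. dadd D (dmul D (M i k) (N k j)) (dmul D (M i k) (P k j))) n"
    using ij c by (auto simp: Mat_mul_entry Mat_add_entry distrib_left intro: dsum_cong)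
  also have "\<dots> = dadd (Mat n D) (dmul (Mat n D) M N) (dmul (Mat n D) M P) i j"
    using ij c by (simp add: Mat_mul_entry Mat_add_entry dsum_add)
  finally show "dmul (Mat n D) M (dadd (Mat n D) N P) i j =
      dadd (Mat n D) (dmul (Mat n D) M N) (dmul (Mat n D) M P) i j" .
qed

lemma Mat_distrib_right:
  assumes M: "M \<in> dcar (Mat n D)" and N: "N \<in> dcar (Mat n D)" and P: "P \<in> dcar (Mat n D)"
  shows "dmul (Mat n D) (dadd (Mat n D) M N) P =
    dadd (Mat n D) (dmul (Mat n D) M P) (dmul (Mat n D) N P)"
proof (rule Mat_eqI[where n = n and K = D])
  show "dmul (Mat n D) (dadd (Mat n D) M N) P \<in> dcar (Mat n D)"
    and "dadd (Mat n D) (dmul (Mat n D) M P) (dmul (Mat n D) N P) \<in> dcar (Mat n D)"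
    using assms by (simp_all add: Mat_mul_closed Mat_add_closed)
  fix i j assume ij: "i < n" "j < n"
  have c: "\<And>a b. a < n \<Longrightarrow> b < n \<Longrightarrow> M a b \<in> dcar D \<and> N a b \<in> dcar D \<and> P a b \<in> dcar D"
    using assms by (simp add: Mat_entry_closed)
  have "dmul (Mat n D) (dadd (Mat n D) M N) P i j
      = dsum D (\<lambda>k. dadd D (dmul D (M i k) (P k j)) (dmul D (N i k) (P k j))) n"
    using ij c by (auto simp: Mat_mul_entry Mat_add_entry distrib_right intro: dsum_cong)
  also have "\<dots> = dadd (Mat n D) (dmul (Mat n D) M P) (dmul (Mat n D) N P) i j"
    using ij c by (simp add: Mat_mul_entry Mat_add_entry dsum_add)
  finally show "dmul (Mat n D) (dadd (Mat n D) M N) P i j =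
      dadd (Mat n D) (dmul (Mat n D) M P) (dmul (Mat n D) N P) i j" .
qed

lemma Mat_unit_closed: "dunit (Mat n D) \<in> dcar (Mat n D)"
  by (simp add: Mat_simps)

lemma Mat_mul_unit_left:
  assumes M: "M \<in> dcar (Mat n D)"
  shows "dmul (Mat n D) (dunit (Mat n D)) M = M"
proof (rule Mat_eqI[where n = n and K = D])
  show "dmul (Mat n D) (dunit (Mat n D)) M \<in> dcar (Mat n D)"
    using M by (simp add: Mat_mul_closed Mat_unit_closed)
  fix i j assume ij: "i < n" "j < n"
  have "dmul (Mat n D) (dunit (Mat n D)) M i j = dsum D (\<lambda>k. if i = k then M k j else dzero D) n"
    using ij M by (auto simp: Mat_mul_entry Mat_unit_entry Mat_entry_closed intro: dsum_cong)
  also have "\<dots> = M i j" using ij M by (simp add: dsum_delta' Mat_entry_closed)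
  finally show "dmul (Mat n D) (dunit (Mat n D)) M i j = M i j" .
qed (rule M)

lemma Mat_mul_unit_right:
  assumes M: "M \<in> dcar (Mat n D)"
  shows "dmul (Mat n D) M (dunit (Mat n D)) = M"
proof (rule Mat_eqI[where n = n and K = D])
  show "dmul (Mat n D) M (dunit (Mat n D)) \<in> dcar (Mat n D)"
    using M by (simp add: Mat_mul_closed Mat_unit_closed)
  fix i j assume ij: "i < n" "j < n"
  have "dmul (Mat n D) M (dunit (Mat n D)) i j = dsum D (\<lambda>k. if k = j then M i k else dzero D) n"
    using ij M by (auto simp: Mat_mul_entry Mat_unit_entry Mat_entry_closed intro: dsum_cong)
  also have "\<dots> = M i j" using ij M by (simp add: dsum_delta Mat_entry_closed)
  finally show "dmul (Mat n D) M (dunit (Mat n D)) i j = M i j" .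
qed (rule M)

lemma is_dioid_Mat: "is_dioid (Mat n D)"
  unfolding is_dioid_def
proof (intro conjI ballI)
  fix a b c assume a: "a \<in> dcar (Mat n D)" and b: "b \<in> dcar (Mat n D)" and c: "c \<in> dcar (Mat n D)"
  show "dmul (Mat n D) (dmul (Mat n D) a b) c = dmul (Mat n D) a (dmul (Mat n D) b c)"
    using a b c by (rule Mat_mul_assoc)
  show "dmul (Mat n D) a (dadd (Mat n D) b c) =
      dadd (Mat n D) (dmul (Mat n D) a b) (dmul (Mat n D) a c)"
    using a b c by (rule Mat_distrib_left)
  show "dmul (Mat n D) (dadd (Mat n D) a b) c =
      dadd (Mat n D) (dmul (Mat n D) a c) (dmul (Mat n D) b c)"
    using a b c by (rule Mat_distrib_right)
  show "dadd (Mat n D) (dadd (Mat n D) a b) c = dadd (Mat n D) a (dadd (Mat n D) b c)"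
    using a b c by (intro Mat_eqI[where n = n and K = D] Mat_add_closed)
      (auto simp: Mat_add_entry Mat_entry_closed add_assoc)
next
  fix a b assume a: "a \<in> dcar (Mat n D)" and b: "b \<in> dcar (Mat n D)"
  show "dadd (Mat n D) a b \<in> dcar (Mat n D)" "dmul (Mat n D) a b \<in> dcar (Mat n D)"
    using a b by (simp_all add: Mat_add_closed Mat_mul_closed)
  show "dadd (Mat n D) a b = dadd (Mat n D) b a"
    using a b by (intro Mat_eqI[where n = n and K = D] Mat_add_closed)
      (auto simp: Mat_add_entry Mat_entry_closed add_commute)
next
  fix a assume a: "a \<in> dcar (Mat n D)"
  have z: "dzero (Mat n D) \<in> dcar (Mat n D)" by (simp add: Mat_simps)
  show "dadd (Mat n D) a a = a" "dadd (Mat n D) (dzero (Mat n D)) a = a"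
    using a z by (auto intro!: Mat_eqI[where n = n and K = D] Mat_add_closed
        simp: Mat_add_entry Mat_entry_closed Mat_zero_entry)
  show "dmul (Mat n D) (dunit (Mat n D)) a = a" "dmul (Mat n D) a (dunit (Mat n D)) = a"
    using a by (simp_all add: Mat_mul_unit_left Mat_mul_unit_right)
  show "dmul (Mat n D) (dzero (Mat n D)) a = dzero (Mat n D)"
    "dmul (Mat n D) a (dzero (Mat n D)) = dzero (Mat n D)"
    using a z by (auto intro!: Mat_eqI[where n = n and K = D] Mat_mul_closed
        simp: Mat_mul_entry Mat_entry_closed Mat_zero_entry cong: dsum_cong)
qed (simp_all add: Mat_simps)

lemma Mat_le_iff: "M \<in> dcar (Mat n D) \<Longrightarrow> N \<in> dcar (Mat n D) \<Longrightarrow>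
    dleq (Mat n D) M N \<longleftrightarrow> (\<forall>i<n. \<forall>j<n. le (M i j) (N i j))"
proof
  assume "dleq (Mat n D) M N"
  then have "dadd (Mat n D) M N i j = N i j" for i j unfolding dleq_def by simp
  then show "\<forall>i<n. \<forall>j<n. le (M i j) (N i j)" unfolding dleq_def by (metis Mat_add_entry)
next
  assume "M \<in> dcar (Mat n D)" "N \<in> dcar (Mat n D)" and le: "\<forall>i<n. \<forall>j<n. le (M i j) (N i j)"
  then show "dleq (Mat n D) M N"
    unfolding dleq_def using le
    by (intro Mat_eqI[where n = n and K = D] Mat_add_closed) (simp_all add: dleq_def Mat_add_entry)
qed

lemma is_sup_MatI:
  assumes "A \<subseteq> dcar (Mat n D)" "S \<in> dcar (Mat n D)"
    and "\<And>i j. i < n \<Longrightarrow> j < n \<Longrightarrow> is_sup D ((\<lambda>M. M i j) ` A) (S i j)"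
  shows "is_sup (Mat n D) A S"
  unfolding is_sup_def
proof (intro conjI ballI impI)
  show "dleq (Mat n D) M S" if "M \<in> A" for M
    using that assms by (subst Mat_le_iff) (auto intro: is_sup_upper)
  show "dleq (Mat n D) S U" if U: "U \<in> dcar (Mat n D)" "\<forall>M\<in>A. dleq (Mat n D) M U" for U
  proof -
    have "le (S i j) (U i j)" if ij: "i < n" "j < n" for i j
      using assms(3)[OF ij] Mat_entry_closed[OF U(1) ij]
    proof (rule is_sup_least)
      fix x assume "x \<in> (\<lambda>M. M i j) ` A"
      then obtain M where "M \<in> A" "x = M i j" by blast
      then show "le x (U i j)" using U assms(1) ij Mat_le_iff[of M n U] by auto
    qed
    then show ?thesis using U assms(2) by (subst Mat_le_iff) auto
  qed
qed (use assms in auto)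

end

lemma R_morphism_closed: "R_morphism D E f \<Longrightarrow> a \<in> dcar D \<Longrightarrow> f a \<in> dcar E"
  and R_morphism_zero: "R_morphism D E f \<Longrightarrow> f (dzero D) = dzero E"
  and R_morphism_unit: "R_morphism D E f \<Longrightarrow> f (dunit D) = dunit E"
  and R_morphism_add: "R_morphism D E f \<Longrightarrow> a \<in> dcar D \<Longrightarrow> b \<in> dcar D \<Longrightarrow>
    f (dadd D a b) = dadd E (f a) (f b)"
  and R_morphism_mul: "R_morphism D E f \<Longrightarrow> a \<in> dcar D \<Longrightarrow> b \<in> dcar D \<Longrightarrow>
    f (dmul D a b) = dmul E (f a) (f b)"
  and R_morphism_dsup: "R_morphism D E f \<Longrightarrow> A \<in> regsets D \<Longrightarrow> f (dsup D A) = dsup E (f ` A)"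
  unfolding R_morphism_def by blast+

context dioid
begin

lemma R_morphism_dsum: "R_morphism D E f \<Longrightarrow> (\<And>k. k < m \<Longrightarrow> F k \<in> dcar D) \<Longrightarrow>
    f (dsum D F m) = dsum E (\<lambda>k. f (F k)) m"
  by (induction m) (simp_all add: R_morphism_zero R_morphism_add)

lemma R_morphism_mono: "R_morphism D E f \<Longrightarrow> a \<in> dcar D \<Longrightarrow> b \<in> dcar D \<Longrightarrow> le a b \<Longrightarrow>
    dleq E (f a) (f b)"
  unfolding dleq_def by (metis R_morphism_add)

lemma setmul_image:
  assumes "R_morphism D E f" "A \<subseteq> dcar D" "B \<subseteq> dcar D"
  shows "f ` setmul D A B = setmul E (f ` A) (f ` B)"
proof -
  have "f (dmul D a b) = dmul E (f a) (f b)" if "a \<in> A" "b \<in> B" for a b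
    using that assms by (intro R_morphism_mul) auto
  then show ?thesis unfolding setmul_def by (auto simp: image_iff) metis
qed

lemma setpow_image: "R_morphism D E f \<Longrightarrow> A \<subseteq> dcar D \<Longrightarrow> f ` setpow D A k = setpow E (f ` A) k"
  by (induction k) (simp_all add: R_morphism_unit setmul_image setpow_closed)

lemma regsets_image:
  assumes "R_morphism D E f"
  shows "X \<in> regsets D \<Longrightarrow> f ` X \<in> regsets E"
proof (induction X rule: regsets.induct)
  case (reg_single a)
  then show ?case using R_morphism_closed[OF assms] by (simp add: regsets.reg_single)
next
  case (reg_mul A B)
  then show ?case
    using assms by (simp add: setmul_image regsets_closed regsets.reg_mul)
next
  case (reg_star A)
  then have "f ` setstar D A = setstar E (f ` A)"
    unfolding setstar_def image_UN using assms by (simp add: setpow_image regsets_closed)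
  then show ?case using reg_star.IH by (simp add: regsets.reg_star)
qed (simp_all add: regsets.reg_empty image_Un regsets.reg_union)

end

section \<open>Matrices over an R-dioid form an R-dioid\<close>

locale matrix_r_dioid = r_dioid D for D :: "'a dioid_struct" +
  fixes n :: nat
begin

sublocale Mat: dioid "Mat n D"
  by (rule dioid.intro, rule is_dioid_Mat)

text \<open>\<open>R i j\<close> is a regular set of scalars with the same upper bounds as the \<open>(i, j)\<close>-entries
  of \<open>A\<close>. Every regular set of matrices admits such an \<open>R\<close>, whence its supremum exists
  and is computed entrywise.\<close>
definition entrywise_cofinal :: "(nat \<Rightarrow> nat \<Rightarrow> 'a) set \<Rightarrow> (nat \<Rightarrow> nat \<Rightarrow> 'a set) \<Rightarrow> bool" where
  "entrywise_cofinal A R \<longleftrightarrow> (\<forall>i j. R i j \<in> regsets D) \<and>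
     (\<forall>i<n. \<forall>j<n. (\<forall>r\<in>R i j. \<exists>M\<in>A. le r (M i j)) \<and> (\<forall>M\<in>A. le (M i j) (dsup D (R i j))))"

definition entrywise_dsup :: "(nat \<Rightarrow> nat \<Rightarrow> 'a set) \<Rightarrow> nat \<Rightarrow> nat \<Rightarrow> 'a" where
  "entrywise_dsup R = (\<lambda>i j. if i < n \<and> j < n then dsup D (R i j) else dzero D)"

lemma entrywise_cofinal_regsets: "entrywise_cofinal A R \<Longrightarrow> R i j \<in> regsets D"
  and entrywise_cofinal_lower: "entrywise_cofinal A R \<Longrightarrow> i < n \<Longrightarrow> j < n \<Longrightarrow> r \<in> R i j \<Longrightarrow>
    \<exists>M\<in>A. le r (M i j)"
  and entrywise_cofinal_upper: "entrywise_cofinal A R \<Longrightarrow> i < n \<Longrightarrow> j < n \<Longrightarrow> M \<in> A \<Longrightarrow>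
    le (M i j) (dsup D (R i j))"
  unfolding entrywise_cofinal_def by blast+

lemma entrywise_dsup_closed: "(\<And>i j. R i j \<in> regsets D) \<Longrightarrow> entrywise_dsup R \<in> dcar (Mat n D)"
  by (rule Mat_memI) (auto simp: entrywise_dsup_def dsup_closed)

lemma is_sup_entrywise_dsup:
  assumes A: "A \<subseteq> dcar (Mat n D)" and R: "entrywise_cofinal A R"
  shows "is_sup (Mat n D) A (entrywise_dsup R)"
proof (rule is_sup_MatI[OF A])
  have regular: "\<And>i j. R i j \<in> regsets D" using R by (rule entrywise_cofinal_regsets)
  then show "entrywise_dsup R \<in> dcar (Mat n D)" by (rule entrywise_dsup_closed)
  fix i j assume ij: "i < n" "j < n"
  have "is_sup D ((\<lambda>M. M i j) ` A) (dsup D (R i j))"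
  proof (rule is_sup_cofinal[OF is_sup_dsup[OF regular]])
    show "(\<lambda>M. M i j) ` A \<subseteq> dcar D" using A ij by (auto intro: Mat_entry_closed)
    show "R i j \<subseteq> dcar D" using regular by (rule regsets_closed)
    show "\<exists>x\<in>(\<lambda>M. M i j) ` A. le r x" if "r \<in> R i j" for r
      using entrywise_cofinal_lower[OF R ij that] by blast
    show "le x (dsup D (R i j))" if "x \<in> (\<lambda>M. M i j) ` A" for x
      using that entrywise_cofinal_upper[OF R ij] by blast
  qed
  then show "is_sup D ((\<lambda>M. M i j) ` A) (entrywise_dsup R i j)"
    using ij by (simp add: entrywise_dsup_def)
qed

lemma entrywise_cofinal_empty: "entrywise_cofinal {} (\<lambda>i j. {})"
  unfolding entrywise_cofinal_def by (simp add: reg_empty)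

lemma entrywise_cofinal_singleton:
  assumes M: "M \<in> dcar (Mat n D)"
  shows "entrywise_cofinal {M} (\<lambda>i j. {M i j})"
  unfolding entrywise_cofinal_def
proof (intro conjI allI impI ballI)
  fix i j
  show "{M i j} \<in> regsets D"
    using M by (cases "i < n \<and> j < n") (simp_all add: Mat_entry_closed Mat_entry_zero reg_single)
  assume ij: "i < n" "j < n"
  then have Mij: "M i j \<in> dcar D" using M by (simp add: Mat_entry_closed)
  show "\<exists>N\<in>{M}. le r (N i j)" if "r \<in> {M i j}" for r
    using that Mij by simp
  show "le (N i j) (dsup D {M i j})" if "N \<in> {M}" for N
    using that Mij dsup_eqI[OF is_sup_singleton[OF Mij]] by simp
qed

lemma entrywise_cofinal_Un:
  assumes A: "A \<subseteq> dcar (Mat n D)" and B: "B \<subseteq> dcar (Mat n D)"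
    and RA: "entrywise_cofinal A RA" and RB: "entrywise_cofinal B RB"
  shows "entrywise_cofinal (A \<union> B) (\<lambda>i j. RA i j \<union> RB i j)"
  unfolding entrywise_cofinal_def
proof (intro conjI allI impI ballI)
  fix i j
  have sup: "is_sup D (RA i j) (dsup D (RA i j))" "is_sup D (RB i j) (dsup D (RB i j))"
    "is_sup D (RA i j \<union> RB i j) (dsup D (RA i j \<union> RB i j))"
    using RA RB by (auto intro: is_sup_dsup reg_union entrywise_cofinal_regsets)
  show "RA i j \<union> RB i j \<in> regsets D"
    using RA RB by (auto intro: reg_union entrywise_cofinal_regsets)
  assume ij: "i < n" "j < n"
  show "\<exists>M\<in>A \<union> B. le r (M i j)" if "r \<in> RA i j \<union> RB i j" for r
    using that entrywise_cofinal_lower[OF RA ij] entrywise_cofinal_lower[OF RB ij] by blast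
  show "le (M i j) (dsup D (RA i j \<union> RB i j))" if M: "M \<in> A \<union> B" for M
  proof -
    have Mij: "M i j \<in> dcar D" using M A B ij by (auto intro: Mat_entry_closed)
    have closed: "dsup D (RA i j) \<in> dcar D" "dsup D (RB i j) \<in> dcar D"
      "dsup D (RA i j \<union> RB i j) \<in> dcar D"
      using sup by (auto intro: is_sup_closed)
    from M show ?thesis
    proof
      assume "M \<in> A"
      then have "le (M i j) (dsup D (RA i j))" using ij by (intro entrywise_cofinal_upper[OF RA])
      moreover have "le (dsup D (RA i j)) (dsup D (RA i j \<union> RB i j))"
        by (rule is_sup_mono[OF _ sup(1) sup(3)]) blast
      ultimately show ?thesis using le_trans[OF Mij closed(1) closed(3)] by blast
    next
      assume "M \<in> B"
      then have "le (M i j) (dsup D (RB i j))" using ij by (intro entrywise_cofinal_upper[OF RB])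
      moreover have "le (dsup D (RB i j)) (dsup D (RA i j \<union> RB i j))"
        by (rule is_sup_mono[OF _ sup(2) sup(3)]) blast
      ultimately show ?thesis using le_trans[OF Mij closed(2) closed(3)] by blast
    qed
  qed
qed

lemma le_Mat_mul_entry:
  assumes M: "M \<in> dcar (Mat n D)" and N: "N \<in> dcar (Mat n D)" and ijk: "i < n" "j < n" "k < n"
    and x: "x \<in> dcar D" and y: "y \<in> dcar D" and le_x: "le x (M i k)" and le_y: "le y (N k j)"
  shows "le (dmul D x y) (dmul (Mat n D) M N i j)"
proof -
  have c: "\<And>a b. a < n \<Longrightarrow> b < n \<Longrightarrow> M a b \<in> dcar D \<and> N a b \<in> dcar D"
    using M N by (simp add: Mat_entry_closed)
  have "le (dmul D x y) (dmul D (M i k) (N k j))"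
    using c ijk x y le_x le_y by (intro mul_mono) auto
  moreover have "le (dmul D (M i k) (N k j)) (dsum D (\<lambda>k. dmul D (M i k) (N k j)) n)"
    using c ijk by (intro dsum_upper) auto
  ultimately show ?thesis
    using c ijk x y le_trans[of "dmul D x y" "dmul D (M i k) (N k j)"] by (simp add: Mat_mul_entry)
qed

lemma Mat_mul_entry_le_dsum:
  assumes M: "M \<in> dcar (Mat n D)" and N: "N \<in> dcar (Mat n D)" and ij: "i < n" "j < n"
    and ab: "\<And>k. k < n \<Longrightarrow> a k \<in> dcar D \<and> b k \<in> dcar D"
    and le_a: "\<And>k. k < n \<Longrightarrow> le (M i k) (a k)" and le_b: "\<And>k. k < n \<Longrightarrow> le (N k j) (b k)"
  shows "le (dmul (Mat n D) M N i j) (dsum D (\<lambda>k. dmul D (a k) (b k)) n)"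
  using ij M N ab le_a le_b
  by (simp add: Mat_mul_entry) (intro dsum_mono mul_mono, auto simp: Mat_entry_closed)

lemma dsup_UN_setmul:
  assumes "\<And>i j. RA i j \<in> regsets D" and "\<And>i j. RB i j \<in> regsets D"
  shows "dsup D (\<Union>k<n. setmul D (RA i k) (RB k j)) =
    dsum D (\<lambda>k. dmul D (dsup D (RA i k)) (dsup D (RB k j))) n"
proof (rule dsup_eqI, rule is_sup_UN_lessThan)
  fix k
  show "setmul D (RA i k) (RB k j) \<subseteq> dcar D" using assms by (intro regsets_closed reg_mul)
  have "is_sup D (setmul D (RA i k) (RB k j)) (dsup D (setmul D (RA i k) (RB k j)))"
    using assms by (intro is_sup_dsup reg_mul)
  then show "is_sup D (setmul D (RA i k) (RB k j)) (dmul D (dsup D (RA i k)) (dsup D (RB k j)))"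
    using assms by (simp add: dsup_setmul)
qed

lemma entrywise_cofinal_setmul:
  assumes A: "A \<subseteq> dcar (Mat n D)" and B: "B \<subseteq> dcar (Mat n D)"
    and RA: "entrywise_cofinal A RA" and RB: "entrywise_cofinal B RB"
  shows "entrywise_cofinal (setmul (Mat n D) A B) (\<lambda>i j. \<Union>k<n. setmul D (RA i k) (RB k j))"
  unfolding entrywise_cofinal_def
proof (intro conjI allI impI ballI)
  have regular: "\<And>i j. RA i j \<in> regsets D" "\<And>i j. RB i j \<in> regsets D"
    using RA RB by (auto intro: entrywise_cofinal_regsets)
  fix i j
  show "(\<Union>k<n. setmul D (RA i k) (RB k j)) \<in> regsets D"
    using regular by (intro regsets_UN_lessThan reg_mul)
  assume ij: "i < n" "j < n"
  show "\<exists>P\<in>setmul (Mat n D) A B. le r (P i j)" if r: "r \<in> (\<Union>k<n. setmul D (RA i k) (RB k j))" for r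
  proof -
    obtain k a b where k: "k < n" and a: "a \<in> RA i k" and b: "b \<in> RB k j" and r_ab: "r = dmul D a b"
      using r unfolding UN_iff setmul_iff by blast
    obtain M where M: "M \<in> A" "le a (M i k)" using entrywise_cofinal_lower[OF RA ij(1) k a] by blast
    obtain N where N: "N \<in> B" "le b (N k j)" using entrywise_cofinal_lower[OF RB k ij(2) b] by blast
    have "a \<in> dcar D" "b \<in> dcar D"
      using a b regsets_closed[OF regular(1)] regsets_closed[OF regular(2)] by blast+
    then have "le r (dmul (Mat n D) M N i j)"
      unfolding r_ab using M N A B ij k by (intro le_Mat_mul_entry) auto
    moreover have "dmul (Mat n D) M N \<in> setmul (Mat n D) A B"
      using M N unfolding Mat.setmul_iff by blast
    ultimately show ?thesis by blast
  qed
  show "le (P i j) (dsup D (\<Union>k<n. setmul D (RA i k) (RB k j)))"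
    if P: "P \<in> setmul (Mat n D) A B" for P
  proof -
    obtain M N where MN: "M \<in> A" "N \<in> B" "P = dmul (Mat n D) M N"
      using P unfolding Mat.setmul_iff by blast
    have "le (P i j) (dsum D (\<lambda>k. dmul D (dsup D (RA i k)) (dsup D (RB k j))) n)"
      unfolding MN(3) using MN(1,2) A B ij
      by (intro Mat_mul_entry_le_dsum entrywise_cofinal_upper[OF RA] entrywise_cofinal_upper[OF RB])
        (auto intro: dsup_closed regular)
    then show ?thesis using regular by (simp add: dsup_UN_setmul)
  qed
qed

text \<open>The \<open>(i, j)\<close>-entries of the matrices in \<open>A\<^sup>*\<close> are sums of labels of paths from \<open>i\<close>
  to \<open>j\<close> whose edges are labelled by entries of \<open>A\<close>.\<close>
definition star_entries :: "(nat \<Rightarrow> nat \<Rightarrow> 'a set) \<Rightarrow> nat \<Rightarrow> nat \<Rightarrow> 'a set" where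
  "star_entries R i j = (if i = j then {dunit D} else {}) \<union> paths_via R {..<n} i j"

lemma star_entries_regular: "(\<And>i j. R i j \<in> regsets D) \<Longrightarrow> star_entries R i j \<in> regsets D"
  unfolding star_entries_def
  by (intro reg_union paths_via_regular regsets_closed) (auto intro: reg_single reg_empty)

lemma path_set_lower:
  assumes A: "A \<subseteq> dcar (Mat n D)" and R: "entrywise_cofinal A R" and j: "j < n"
  shows "set xs \<subseteq> {..<n} \<Longrightarrow> i < n \<Longrightarrow> x \<in> path_set R i xs j \<Longrightarrow>
    \<exists>m. \<exists>M\<in>setpow (Mat n D) A m. le x (M i j)"
proof (induction xs arbitrary: i x)
  case Nil
  then obtain M where "M \<in> A" "le x (M i j)" using entrywise_cofinal_lower[OF R _ j] by auto
  then show ?case using Mat.setpow_one[OF A] by blast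
next
  case (Cons y xs)
  have R_closed: "\<And>i j. R i j \<subseteq> dcar D" using R by (intro regsets_closed entrywise_cofinal_regsets)
  from Cons.prems obtain a b where ab: "x = dmul D a b" "a \<in> R i y" "b \<in> path_set R y xs j"
    unfolding path_set.simps setmul_iff by blast
  have y: "y < n" and xs: "set xs \<subseteq> {..<n}" using Cons.prems by auto
  obtain N where N: "N \<in> A" "le a (N i y)"
    using entrywise_cofinal_lower[OF R Cons.prems(2) y ab(2)] by blast
  obtain m M where M: "M \<in> setpow (Mat n D) A m" "le b (M y j)"
    using Cons.IH[OF xs y ab(3)] by blast
  have "N \<in> dcar (Mat n D)" "M \<in> dcar (Mat n D)" using N M A Mat.setpow_closed[OF A] by blast+
  moreover have "a \<in> dcar D" using ab(2) R_closed by blast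
  moreover have "b \<in> dcar D" using ab(3) path_set_closed[of R, OF R_closed] by blast
  ultimately have "le x (dmul (Mat n D) N M i j)"
    unfolding ab(1) using Cons.prems(2) j y N(2) M(2) by (intro le_Mat_mul_entry)
  moreover have "dmul (Mat n D) N M \<in> setpow (Mat n D) A (Suc m)"
    unfolding setpow.simps Mat.setmul_iff using N M by blast
  ultimately show ?case by blast
qed

lemma setmul_star_entries_subset:
  assumes R: "entrywise_cofinal A R" and k: "k < n"
  shows "setmul D (R i k) (star_entries R k j) \<subseteq> star_entries R i j"
proof
  have R_closed: "\<And>i j. R i j \<subseteq> dcar D" using R by (intro regsets_closed entrywise_cofinal_regsets)
  fix z assume "z \<in> setmul D (R i k) (star_entries R k j)"
  then obtain a w where z: "z = dmul D a w" and a: "a \<in> R i k" and w: "w \<in> star_entries R k j"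
    unfolding setmul_iff by blast
  have "z \<in> paths_via R {..<n} i j"
  proof (cases "w \<in> paths_via R {..<n} k j")
    case False
    then have "k = j" "w = dunit D" using w unfolding star_entries_def by (auto split: if_splits)
    moreover have "a \<in> dcar D" using a R_closed by blast
    ultimately have "z \<in> path_set R i [] j" using z a by simp
    then show ?thesis using path_set_subset_paths_via[of "[]" "{..<n}" R i j] by auto
  next
    case True
    then obtain xs where xs: "set xs \<subseteq> {..<n}" "w \<in> path_set R k xs j"
      unfolding paths_via_def by blast
    then have "z \<in> path_set R i (k # xs) j" unfolding path_set.simps setmul_iff using z a by blast
    moreover have "set (k # xs) \<subseteq> {..<n}" using xs k by auto
    ultimately show ?thesis using path_set_subset_paths_via[of "k # xs" "{..<n}" R i j] by auto
  qed
  then show "z \<in> star_entries R i j" unfolding star_entries_def by blast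
qed

lemma setpow_entry_le_dsup_star_entries:
  assumes A: "A \<subseteq> dcar (Mat n D)" and R: "entrywise_cofinal A R"
  shows "M \<in> setpow (Mat n D) A m \<Longrightarrow> i < n \<Longrightarrow> j < n \<Longrightarrow> le (M i j) (dsup D (star_entries R i j))"
proof (induction m arbitrary: M i j)
  case 0
  have "star_entries R i j \<in> regsets D"
    using R by (intro star_entries_regular entrywise_cofinal_regsets)
  moreover have "dunit D \<in> star_entries R i i" unfolding star_entries_def by simp
  ultimately show ?case
    using 0 is_sup_upper[OF is_sup_dsup] by (auto simp: Mat_unit_entry dsup_closed)
next
  case (Suc m)
  have regular: "\<And>i j. R i j \<in> regsets D" "\<And>i j. star_entries R i j \<in> regsets D"
    using R by (auto intro: star_entries_regular entrywise_cofinal_regsets)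
  obtain N M' where NM: "N \<in> A" "M' \<in> setpow (Mat n D) A m" "M = dmul (Mat n D) N M'"
    using Suc.prems unfolding setpow.simps Mat.setmul_iff by blast
  have NM_closed: "N \<in> dcar (Mat n D)" "M' \<in> dcar (Mat n D)"
    using NM A Mat.setpow_closed[OF A] by blast+
  let ?s = "dsum D (\<lambda>k. dmul D (dsup D (R i k)) (dsup D (star_entries R k j))) n"
  have "le (M i j) ?s"
    unfolding NM(3) using NM_closed Suc.prems(2,3) regular
    by (intro Mat_mul_entry_le_dsum entrywise_cofinal_upper[OF R _ _ NM(1)] Suc.IH[OF NM(2)])
      (auto simp: dsup_closed)
  moreover have "le ?s (dsup D (star_entries R i j))"
  proof (rule dsum_least)
    fix k assume k: "k < n"
    have "dmul D (dsup D (R i k)) (dsup D (star_entries R k j)) =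
        dsup D (setmul D (R i k) (star_entries R k j))"
      using regular by (simp add: dsup_setmul)
    also have "le \<dots> (dsup D (star_entries R i j))"
      by (rule is_sup_mono[OF setmul_star_entries_subset[OF R k]
            is_sup_dsup[OF reg_mul[OF regular]] is_sup_dsup[OF regular(2)]])
    finally show "le (dmul D (dsup D (R i k)) (dsup D (star_entries R k j)))
        (dsup D (star_entries R i j))" .
  qed (use regular in \<open>simp_all add: dsup_closed\<close>)
  moreover have "M i j \<in> dcar D"
    using Mat_entry_closed[OF Mat.mul_closed[OF NM_closed] Suc.prems(2,3)] NM(3) by simp
  ultimately show ?case
    using le_trans[of "M i j" ?s] regular by (simp add: dsup_closed)
qed

lemma entrywise_cofinal_setstar:
  assumes A: "A \<subseteq> dcar (Mat n D)" and R: "entrywise_cofinal A R"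
  shows "entrywise_cofinal (setstar (Mat n D) A) (star_entries R)"
  unfolding entrywise_cofinal_def
proof (intro conjI allI impI ballI)
  fix i j
  show "star_entries R i j \<in> regsets D"
    using R by (intro star_entries_regular entrywise_cofinal_regsets)
  assume ij: "i < n" "j < n"
  show "\<exists>M\<in>setstar (Mat n D) A. le x (M i j)" if x: "x \<in> star_entries R i j" for x
  proof (cases "x \<in> paths_via R {..<n} i j")
    case True
    then obtain xs where "set xs \<subseteq> {..<n}" "x \<in> path_set R i xs j" unfolding paths_via_def by blast
    then obtain m M where "M \<in> setpow (Mat n D) A m" "le x (M i j)"
      using path_set_lower[OF A R ij(2)] ij by blast
    then show ?thesis unfolding setstar_def by blast
  next
    case False
    then have "i = j" "x = dunit D" using x unfolding star_entries_def by (auto split: if_splits)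
    then show ?thesis
      using ij Mat.unit_in_setstar
      by (intro bexI[of _ "dunit (Mat n D)"]) (simp_all add: Mat_unit_entry)
  qed
  show "le (M i j) (dsup D (star_entries R i j))" if "M \<in> setstar (Mat n D) A" for M
    using that setpow_entry_le_dsup_star_entries[OF A R] ij unfolding setstar_def by blast
qed

lemma entrywise_cofinal_exists: "A \<in> regsets (Mat n D) \<Longrightarrow> \<exists>R. entrywise_cofinal A R"
proof (induction A rule: regsets.induct)
  case reg_empty
  then show ?case using entrywise_cofinal_empty by blast
next
  case (reg_single M)
  then show ?case using entrywise_cofinal_singleton by blast
next
  case (reg_union A B)
  then show ?case using entrywise_cofinal_Un Mat.regsets_closed by blast
next
  case (reg_mul A B)
  then show ?case using entrywise_cofinal_setmul Mat.regsets_closed by blast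
next
  case (reg_star A)
  then show ?case using entrywise_cofinal_setstar Mat.regsets_closed by blast
qed

lemma R_dioid_Mat: "R_dioid (Mat n D)"
  unfolding R_dioid_def
proof (intro conjI ballI)
  show "is_dioid (Mat n D)" by (rule is_dioid_Mat)
  fix A assume A: "A \<in> regsets (Mat n D)"
  then obtain RA where RA: "entrywise_cofinal A RA" using entrywise_cofinal_exists by blast
  have A_closed: "A \<subseteq> dcar (Mat n D)" using A by (rule Mat.regsets_closed)
  then show "\<exists>s. is_sup (Mat n D) A s" using is_sup_entrywise_dsup RA by blast
  fix B assume B: "B \<in> regsets (Mat n D)"
  then obtain RB where RB: "entrywise_cofinal B RB" using entrywise_cofinal_exists by blast
  have B_closed: "B \<subseteq> dcar (Mat n D)" using B by (rule Mat.regsets_closed)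
  have regular: "\<And>i j. RA i j \<in> regsets D" "\<And>i j. RB i j \<in> regsets D"
    using RA RB by (auto intro: entrywise_cofinal_regsets)
  let ?R = "\<lambda>i j. \<Union>k<n. setmul D (RA i k) (RB k j)"
  have "dsup (Mat n D) (setmul (Mat n D) A B) = entrywise_dsup ?R"
    using is_sup_entrywise_dsup[OF Mat.setmul_closed entrywise_cofinal_setmul]
      A_closed B_closed RA RB
    by (simp add: Mat.dsup_eqI)
  also have "\<dots> = dmul (Mat n D) (entrywise_dsup RA) (entrywise_dsup RB)"
    using regular
    by (intro Mat_eqI[where n = n and K = D] Mat.mul_closed entrywise_dsup_closed
        regsets_UN_lessThan reg_mul)
      (simp_all add: entrywise_dsup_def dsup_UN_setmul Mat_mul_entry cong: dsum_cong)
  also have "\<dots> = dmul (Mat n D) (dsup (Mat n D) A) (dsup (Mat n D) B)"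
    using Mat.dsup_eqI[OF is_sup_entrywise_dsup[OF A_closed RA]]
      Mat.dsup_eqI[OF is_sup_entrywise_dsup[OF B_closed RB]] by simp
  finally show "dsup (Mat n D) (setmul (Mat n D) A B) =
      dmul (Mat n D) (dsup (Mat n D) A) (dsup (Mat n D) B)" .
qed

end

lemma Bool_simps:
  "dcar Bool_dioid = UNIV" "dadd Bool_dioid = (\<or>)" "dmul Bool_dioid = (\<and>)"
  "dzero Bool_dioid = False" "dunit Bool_dioid = True"
  by (simp_all add: Bool_dioid_def)

lemma is_dioid_Bool: "is_dioid Bool_dioid"
  unfolding is_dioid_def Bool_simps by auto

interpretation Bool: dioid Bool_dioid
  by (rule dioid.intro, rule is_dioid_Bool)

interpretation Bool_Mat: dioid "Mat n Bool_dioid" for n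
  by (rule dioid.intro, rule Bool.is_dioid_Mat)

lemma Bool_dsum: "dsum Bool_dioid f m \<longleftrightarrow> (\<exists>k<m. f k)"
  by (induction m) (auto simp: Bool_simps less_Suc_eq)

lemma Bool_is_sup: "is_sup Bool_dioid X (True \<in> X)"
  by (rule Bool.is_supI) (auto simp: dleq_def Bool_simps)

lemma Bool_Mat_closed_iff: "M \<in> dcar (Mat n Bool_dioid) \<longleftrightarrow> (\<forall>i j. \<not> (i < n \<and> j < n) \<longrightarrow> \<not> M i j)"
  by (simp add: Mat_simps Bool_simps)

lemma Bool_Mat_dsup:
  assumes "A \<subseteq> dcar (Mat n Bool_dioid)"
  shows "dsup (Mat n Bool_dioid) A = (\<lambda>i j. i < n \<and> j < n \<and> (\<exists>M\<in>A. M i j))"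
proof (rule Bool_Mat.dsup_eqI, rule Bool.is_sup_MatI[OF assms])
  show "(\<lambda>i j. i < n \<and> j < n \<and> (\<exists>M\<in>A. M i j)) \<in> dcar (Mat n Bool_dioid)"
    by (auto simp: Bool_Mat_closed_iff)
  fix i j assume "i < n" "j < n"
  then show "is_sup Bool_dioid ((\<lambda>M. M i j) ` A) (i < n \<and> j < n \<and> (\<exists>M\<in>A. M i j))"
    using Bool_is_sup[of "(\<lambda>M. M i j) ` A"] by (simp add: image_iff)
qed

context matrix_r_dioid
begin

lemma scalar_mat_entry: "scalar_mat n D a i j = (if i = j \<and> i < n then a else dzero D)"
  and bool_mat_entry: "bool_mat n D B i j = (if i < n \<and> j < n \<and> B i j then dunit D else dzero D)"
  by (simp_all add: scalar_mat_def bool_mat_def)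

lemma scalar_mat_closed: "a \<in> dcar D \<Longrightarrow> scalar_mat n D a \<in> dcar (Mat n D)"
  by (rule Mat_memI) (auto simp: scalar_mat_entry)

lemma bool_mat_closed: "bool_mat n D B \<in> dcar (Mat n D)"
  by (rule Mat_memI) (auto simp: bool_mat_entry)

lemma scalar_mat_mul_entry:
  assumes "i < n" "j < n" "x \<in> dcar D" "N \<in> dcar (Mat n D)"
  shows "dmul (Mat n D) (scalar_mat n D x) N i j = dmul D x (N i j)"
proof -
  have "dmul (Mat n D) (scalar_mat n D x) N i j =
      dsum D (\<lambda>k. if i = k then dmul D x (N k j) else dzero D) n"
    using assms by (auto simp: Mat_mul_entry scalar_mat_entry Mat_entry_closed intro: dsum_cong)
  also have "\<dots> = dmul D x (N i j)" using assms by (simp add: dsum_delta' Mat_entry_closed)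
  finally show ?thesis .
qed

lemma mul_scalar_mat_entry:
  assumes "i < n" "j < n" "x \<in> dcar D" "N \<in> dcar (Mat n D)"
  shows "dmul (Mat n D) N (scalar_mat n D x) i j = dmul D (N i j) x"
proof -
  have "dmul (Mat n D) N (scalar_mat n D x) i j =
      dsum D (\<lambda>k. if k = j then dmul D (N i k) x else dzero D) n"
    using assms by (auto simp: Mat_mul_entry scalar_mat_entry Mat_entry_closed intro: dsum_cong)
  also have "\<dots> = dmul D (N i j) x" using assms by (simp add: dsum_delta Mat_entry_closed)
  finally show ?thesis .
qed

lemma scalar_mat_dsup:
  assumes A: "A \<in> regsets D"
  shows "scalar_mat n D (dsup D A) = dsup (Mat n D) (scalar_mat n D ` A)"
proof (rule sym, intro Mat.dsup_eqI is_sup_MatI)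
  have A_closed: "A \<subseteq> dcar D" using A by (rule regsets_closed)
  then show "scalar_mat n D ` A \<subseteq> dcar (Mat n D)" by (auto intro: scalar_mat_closed)
  show "scalar_mat n D (dsup D A) \<in> dcar (Mat n D)" using A by (intro scalar_mat_closed dsup_closed)
  fix i j assume ij: "i < n" "j < n"
  show "is_sup D ((\<lambda>M. M i j) ` scalar_mat n D ` A) (scalar_mat n D (dsup D A) i j)"
  proof (cases "i = j")
    case True
    then have "(\<lambda>M. M i j) ` scalar_mat n D ` A = A"
      using ij by (simp add: image_image scalar_mat_entry)
    then show ?thesis using True ij is_sup_dsup[OF A] by (simp add: scalar_mat_entry)
  next
    case False
    then show ?thesis by (auto intro: is_sup_subset_zero simp: scalar_mat_entry)
  qed
qed

lemma R_morphism_scalar_mat: "R_morphism D (Mat n D) (scalar_mat n D)"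
  unfolding R_morphism_def
proof (intro conjI ballI)
  fix a b assume a: "a \<in> dcar D" and b: "b \<in> dcar D"
  show "scalar_mat n D (dadd D a b) = dadd (Mat n D) (scalar_mat n D a) (scalar_mat n D b)"
    using a b by (intro ext) (auto simp: scalar_mat_def Mat_simps)
  show "scalar_mat n D (dmul D a b) = dmul (Mat n D) (scalar_mat n D a) (scalar_mat n D b)"
    using a b
    by (intro Mat_eqI[where n = n and K = D] Mat.mul_closed scalar_mat_closed mul_closed)
      (simp_all add: scalar_mat_mul_entry scalar_mat_closed scalar_mat_entry)
next
  show "scalar_mat n D (dzero D) = dzero (Mat n D)" "scalar_mat n D (dunit D) = dunit (Mat n D)"
    by (auto simp: scalar_mat_def Mat_simps)
qed (simp_all add: scalar_mat_closed scalar_mat_dsup)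

lemma bool_mat_dsup:
  assumes A: "A \<in> regsets (Mat n Bool_dioid)"
  shows "bool_mat n D (dsup (Mat n Bool_dioid) A) = dsup (Mat n D) (bool_mat n D ` A)"
proof (rule sym, intro Mat.dsup_eqI is_sup_MatI)
  show "bool_mat n D ` A \<subseteq> dcar (Mat n D)"
    and "bool_mat n D (dsup (Mat n Bool_dioid) A) \<in> dcar (Mat n D)"
    by (auto intro: bool_mat_closed)
  fix i j assume ij: "i < n" "j < n"
  have "(\<lambda>M. M i j) ` bool_mat n D ` A = (\<lambda>N. if N i j then dunit D else dzero D) ` A"
    using ij by (simp add: image_image bool_mat_entry)
  then show "is_sup D ((\<lambda>M. M i j) ` bool_mat n D ` A)
      (bool_mat n D (dsup (Mat n Bool_dioid) A) i j)"
    using ij is_sup_indicator_image[of "\<lambda>N. N i j" A]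
    by (simp add: Bool_Mat_dsup Bool_Mat.regsets_closed[OF A] bool_mat_entry)
qed

lemma R_morphism_bool_mat: "R_morphism (Mat n Bool_dioid) (Mat n D) (bool_mat n D)"
  unfolding R_morphism_def
proof (intro conjI ballI)
  fix a b assume a: "a \<in> dcar (Mat n Bool_dioid)" and b: "b \<in> dcar (Mat n Bool_dioid)"
  show "bool_mat n D (dadd (Mat n Bool_dioid) a b) =
      dadd (Mat n D) (bool_mat n D a) (bool_mat n D b)"
    by (intro ext) (auto simp: bool_mat_def Mat_simps Bool_simps)
  show "bool_mat n D (dmul (Mat n Bool_dioid) a b) =
      dmul (Mat n D) (bool_mat n D a) (bool_mat n D b)"
    by (intro Mat_eqI[where n = n and K = D] Mat.mul_closed bool_mat_closed)
      (auto simp: Mat_mul_entry bool_mat_entry Bool_simps Bool_dsum dsum_indicator[symmetric]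
        intro!: dsum_cong)
next
  show "bool_mat n D (dzero (Mat n Bool_dioid)) = dzero (Mat n D)"
    "bool_mat n D (dunit (Mat n Bool_dioid)) = dunit (Mat n D)"
    unfolding bool_mat_def Mat_simps Bool_simps by (auto intro!: ext)
qed (simp_all add: bool_mat_closed bool_mat_dsup)

lemma scalar_mat_bool_mat_commute:
  assumes "x \<in> dcar D"
  shows "dmul (Mat n D) (scalar_mat n D x) (bool_mat n D y) =
    dmul (Mat n D) (bool_mat n D y) (scalar_mat n D x)"
  using assms
  by (intro Mat_eqI[where n = n and K = D] Mat.mul_closed scalar_mat_closed bool_mat_closed)
    (simp_all add: scalar_mat_mul_entry mul_scalar_mat_entry bool_mat_closed bool_mat_entry)

end

section \<open>The universal property\<close>

definition matrix_unit :: "nat \<Rightarrow> nat \<Rightarrow> nat \<Rightarrow> nat \<Rightarrow> bool" where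
  "matrix_unit i j = (\<lambda>a b. a = i \<and> b = j)"

lemma matrix_unit_closed: "i < n \<Longrightarrow> j < n \<Longrightarrow> matrix_unit i j \<in> dcar (Mat n Bool_dioid)"
  by (auto simp: Bool_Mat_closed_iff matrix_unit_def)

lemma matrix_unit_mul: "i < n \<Longrightarrow> j < n \<Longrightarrow> k < n \<Longrightarrow> l < n \<Longrightarrow>
    dmul (Mat n Bool_dioid) (matrix_unit i j) (matrix_unit k l) =
      (if j = k then matrix_unit i l else dzero (Mat n Bool_dioid))"
  by (intro ext) (auto simp: Mat_simps Bool_simps Bool_dsum matrix_unit_def)

lemma Bool_Mat_unit_eq_dsum:
  "dunit (Mat n Bool_dioid) = dsum (Mat n Bool_dioid) (\<lambda>i. matrix_unit i i) n"
  by (intro ext) (auto simp: Mat_simps Bool_simps Bool_dsum matrix_unit_def Mat_dsum_entry)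

lemma Bool_Mat_eq_dsum: "B \<in> dcar (Mat n Bool_dioid) \<Longrightarrow>
    B = dsum (Mat n Bool_dioid)
      (\<lambda>i. dsum (Mat n Bool_dioid)
        (\<lambda>j. if B i j then matrix_unit i j else dzero (Mat n Bool_dioid)) n) n"
  by (intro ext)
    (auto simp: Bool_Mat_closed_iff Mat_simps Bool_simps Bool_dsum matrix_unit_def Mat_dsum_entry)

context matrix_r_dioid
begin

lemma Mat_eq_dsum:
  assumes M: "M \<in> dcar (Mat n D)"
  shows "M = dsum (Mat n D) (\<lambda>i. dsum (Mat n D)
    (\<lambda>j. dmul (Mat n D) (scalar_mat n D (M i j)) (bool_mat n D (matrix_unit i j))) n) n"
    (is "M = ?S")
proof (rule Mat_eqI[where n = n and K = D])
  show "?S \<in> dcar (Mat n D)"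
    using M by (simp add: Mat.mul_closed scalar_mat_closed bool_mat_closed Mat_entry_closed)
  fix a b assume ab: "a < n" "b < n"
  have "?S a b =
      dsum D (\<lambda>i. dsum D (\<lambda>j. dmul D (M i j) (if a = i \<and> b = j then dunit D else dzero D)) n) n"
    using ab M
    by (simp add: Mat_dsum_entry scalar_mat_mul_entry bool_mat_closed bool_mat_entry matrix_unit_def
        Mat_entry_closed cong: dsum_cong)
  also have "\<dots> =
      dsum D (\<lambda>i. if i = a then dsum D (\<lambda>j. if j = b then M i j else dzero D) n else dzero D) n"
    using M by (auto simp: Mat_entry_closed cong: dsum_cong intro!: dsum_cong)
  also have "\<dots> = M a b" using ab M by (simp add: dsum_delta Mat_entry_closed)
  finally show "M a b = ?S a b" by simp
qed (rule M)

end

locale tensor_lift = matrix_r_dioid D n + E: r_dioid E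
  for D :: "'a dioid_struct" and n :: nat and E :: "'c dioid_struct" +
  fixes f :: "'a \<Rightarrow> 'c" and g :: "(nat \<Rightarrow> nat \<Rightarrow> bool) \<Rightarrow> 'c"
  assumes f: "R_morphism D E f" and g: "R_morphism (Mat n Bool_dioid) E g"
    and f_g_commute: "\<And>x y. x \<in> dcar D \<Longrightarrow> y \<in> dcar (Mat n Bool_dioid) \<Longrightarrow>
      dmul E (f x) (g y) = dmul E (g y) (f x)"
begin

text \<open>Forced by \<open>Mat_eq_dsum\<close>.\<close>
definition lift :: "(nat \<Rightarrow> nat \<Rightarrow> 'a) \<Rightarrow> 'c" where
  "lift M = dsum E (\<lambda>i. dsum E (\<lambda>j. dmul E (f (M i j)) (g (matrix_unit i j))) n) n"

lemma f_closed: "x \<in> dcar D \<Longrightarrow> f x \<in> dcar E"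
  using R_morphism_closed[OF f] .

lemma g_matrix_unit_closed: "i < n \<Longrightarrow> j < n \<Longrightarrow> g (matrix_unit i j) \<in> dcar E"
  using R_morphism_closed[OF g matrix_unit_closed] .

lemma lift_term_closed: "M \<in> dcar (Mat n D) \<Longrightarrow> i < n \<Longrightarrow> j < n \<Longrightarrow>
    dmul E (f (M i j)) (g (matrix_unit i j)) \<in> dcar E"
  by (simp add: f_closed g_matrix_unit_closed Mat_entry_closed)

lemma lift_closed: "M \<in> dcar (Mat n D) \<Longrightarrow> lift M \<in> dcar E"
  unfolding lift_def by (simp add: lift_term_closed)

lemma dsum_g_diagonal: "dsum E (\<lambda>i. g (matrix_unit i i)) n = dunit E"
proof -
  have "dsum E (\<lambda>i. g (matrix_unit i i)) n = g (dsum (Mat n Bool_dioid) (\<lambda>i. matrix_unit i i) n)"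
    by (rule Bool_Mat.R_morphism_dsum[OF g, symmetric]) (simp add: matrix_unit_closed)
  also have "\<dots> = dunit E" by (simp add: Bool_Mat_unit_eq_dsum[symmetric] R_morphism_unit[OF g])
  finally show ?thesis .
qed

lemma lift_scalar_mat: "x \<in> dcar D \<Longrightarrow> lift (scalar_mat n D x) = f x"
proof -
  assume x: "x \<in> dcar D"
  have "lift (scalar_mat n D x) =
      dsum E (\<lambda>i. dsum E (\<lambda>j. if i = j then dmul E (f x) (g (matrix_unit i j)) else dzero E) n) n"
    unfolding lift_def using x
    by (intro E.dsum_cong) (auto simp: scalar_mat_entry R_morphism_zero[OF f] g_matrix_unit_closed)
  also have "\<dots> = dsum E (\<lambda>i. dmul E (f x) (g (matrix_unit i i))) n"
    using x by (intro E.dsum_cong) (simp add: E.dsum_delta' f_closed g_matrix_unit_closed)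
  also have "\<dots> = dmul E (f x) (dsum E (\<lambda>i. g (matrix_unit i i)) n)"
    using x by (intro E.dsum_mul_left[symmetric]) (auto simp: f_closed g_matrix_unit_closed)
  also have "\<dots> = f x" using x by (simp add: dsum_g_diagonal f_closed)
  finally show ?thesis .
qed

lemma lift_bool_mat: "B \<in> dcar (Mat n Bool_dioid) \<Longrightarrow> lift (bool_mat n D B) = g B"
proof -
  assume B: "B \<in> dcar (Mat n Bool_dioid)"
  let ?e = "\<lambda>i j. if B i j then matrix_unit i j else dzero (Mat n Bool_dioid)"
  have closed: "\<And>i j. i < n \<Longrightarrow> j < n \<Longrightarrow> ?e i j \<in> dcar (Mat n Bool_dioid)"
    by (simp add: matrix_unit_closed)
  have "lift (bool_mat n D B) = dsum E (\<lambda>i. dsum E (\<lambda>j. g (?e i j)) n) n"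
    unfolding lift_def
    by (intro E.dsum_cong)
      (auto simp: bool_mat_entry R_morphism_zero[OF f] R_morphism_unit[OF f] R_morphism_zero[OF g]
        g_matrix_unit_closed)
  also have "\<dots> = g (dsum (Mat n Bool_dioid) (\<lambda>i. dsum (Mat n Bool_dioid) (\<lambda>j. ?e i j) n) n)"
    using closed by (simp add: Bool_Mat.R_morphism_dsum[OF g] cong: E.dsum_cong)
  also have "\<dots> = g B" using Bool_Mat_eq_dsum[OF B] by simp
  finally show ?thesis .
qed

lemma lift_unit: "lift (dunit (Mat n D)) = dunit E"
proof -
  have "dunit (Mat n D) = scalar_mat n D (dunit D)" by (auto simp: scalar_mat_def Mat_simps)
  then show ?thesis by (simp add: lift_scalar_mat R_morphism_unit[OF f])
qed

lemma lift_zero: "lift (dzero (Mat n D)) = dzero E"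
  unfolding lift_def
  by (simp add: Mat_simps R_morphism_zero[OF f] g_matrix_unit_closed cong: E.dsum_cong)

lemma lift_add: "M \<in> dcar (Mat n D) \<Longrightarrow> N \<in> dcar (Mat n D) \<Longrightarrow>
    lift (dadd (Mat n D) M N) = dadd E (lift M) (lift N)"
  unfolding lift_def
  by (simp add: Mat_add_entry R_morphism_add[OF f] Mat_entry_closed E.distrib_right f_closed
      g_matrix_unit_closed lift_term_closed E.dsum_add cong: E.dsum_cong)

lemma lift_term_mul:
  assumes M: "M \<in> dcar (Mat n D)" and N: "N \<in> dcar (Mat n D)"
    and ijkl: "i < n" "j < n" "k < n" "l < n"
  shows "dmul E (dmul E (f (M i j)) (g (matrix_unit i j)))
      (dmul E (f (N k l)) (g (matrix_unit k l))) =
    (if j = k then dmul E (f (dmul D (M i j) (N k l))) (g (matrix_unit i l)) else dzero E)"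
proof -
  have closed: "f (M i j) \<in> dcar E" "f (N k l) \<in> dcar E"
    "g (matrix_unit i j) \<in> dcar E" "g (matrix_unit k l) \<in> dcar E"
    using M N ijkl by (simp_all add: f_closed g_matrix_unit_closed Mat_entry_closed)
  have commute: "dmul E (g (matrix_unit i j)) (f (N k l)) = dmul E (f (N k l)) (g (matrix_unit i j))"
    using f_g_commute[of "N k l" "matrix_unit i j"] N ijkl
    by (simp add: Mat_entry_closed matrix_unit_closed)
  have "dmul E (dmul E (f (M i j)) (g (matrix_unit i j)))
      (dmul E (f (N k l)) (g (matrix_unit k l))) =
      dmul E (f (M i j)) (dmul E (dmul E (g (matrix_unit i j)) (f (N k l))) (g (matrix_unit k l)))"
    using closed by (simp add: E.mul_assoc)
  also have "\<dots> =
      dmul E (dmul E (f (M i j)) (f (N k l))) (dmul E (g (matrix_unit i j)) (g (matrix_unit k l)))"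
    using closed by (simp add: commute E.mul_assoc)
  also have "\<dots> = dmul E (f (dmul D (M i j) (N k l)))
      (g (dmul (Mat n Bool_dioid) (matrix_unit i j) (matrix_unit k l)))"
    using M N ijkl
    by (simp add: R_morphism_mul[OF f] R_morphism_mul[OF g] Mat_entry_closed matrix_unit_closed)
  also have "\<dots> =
      (if j = k then dmul E (f (dmul D (M i j) (N k l))) (g (matrix_unit i l)) else dzero E)"
    using M N ijkl by (simp add: matrix_unit_mul R_morphism_zero[OF g] f_closed Mat_entry_closed)
  finally show ?thesis .
qed

lemma lift_row_mul:
  assumes M: "M \<in> dcar (Mat n D)" and N: "N \<in> dcar (Mat n D)" and ik: "i < n" "k < n"
  shows "dmul E (dsum E (\<lambda>j. dmul E (f (M i j)) (g (matrix_unit i j))) n)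
      (dsum E (\<lambda>l. dmul E (f (N k l)) (g (matrix_unit k l))) n) =
    dsum E (\<lambda>l. dmul E (f (dmul D (M i k) (N k l))) (g (matrix_unit i l))) n"
proof -
  let ?t = "\<lambda>j l. dmul E (f (dmul D (M i j) (N k l))) (g (matrix_unit i l))"
  let ?T = "\<lambda>j. dsum E (?t j) n"
  have "dmul E (dsum E (\<lambda>j. dmul E (f (M i j)) (g (matrix_unit i j))) n)
      (dsum E (\<lambda>l. dmul E (f (N k l)) (g (matrix_unit k l))) n) =
    dsum E (\<lambda>j. dsum E (\<lambda>l. if j = k then ?t j l else dzero E) n) n"
    using M N ik
    by (simp add: E.dsum_mul_dsum lift_term_closed lift_term_mul cong: E.dsum_cong)
  also have "\<dots> = dsum E (\<lambda>j. if j = k then ?T j else dzero E) n"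
    by (rule E.dsum_cong) simp
  also have "\<dots> = ?T k"
    using M N ik by (simp add: E.dsum_delta f_closed g_matrix_unit_closed Mat_entry_closed)
  finally show ?thesis .
qed

lemma lift_mul: "M \<in> dcar (Mat n D) \<Longrightarrow> N \<in> dcar (Mat n D) \<Longrightarrow>
    lift (dmul (Mat n D) M N) = dmul E (lift M) (lift N)"
proof -
  assume M: "M \<in> dcar (Mat n D)" and N: "N \<in> dcar (Mat n D)"
  let ?T = "\<lambda>i l k. dmul E (f (dmul D (M i k) (N k l))) (g (matrix_unit i l))"
  have closed: "\<And>i l k. i < n \<Longrightarrow> l < n \<Longrightarrow> k < n \<Longrightarrow> ?T i l k \<in> dcar E"
    using M N by (simp add: f_closed g_matrix_unit_closed Mat_entry_closed)
  have "dmul E (lift M) (lift N) = dsum E (\<lambda>i. dsum E (\<lambda>l. dsum E (?T i l) n) n) n"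
  proof -
    have "dmul E (lift M) (lift N) = dsum E (\<lambda>i. dsum E (\<lambda>k. dmul E
        (dsum E (\<lambda>j. dmul E (f (M i j)) (g (matrix_unit i j))) n)
        (dsum E (\<lambda>l. dmul E (f (N k l)) (g (matrix_unit k l))) n)) n) n"
      unfolding lift_def using M N by (intro E.dsum_mul_dsum) (simp_all add: lift_term_closed)
    also have "\<dots> = dsum E (\<lambda>i. dsum E (\<lambda>k. dsum E (\<lambda>l. ?T i l k) n) n) n"
      using M N by (simp add: lift_row_mul cong: E.dsum_cong)
    also have "\<dots> = dsum E (\<lambda>i. dsum E (\<lambda>l. dsum E (?T i l) n) n) n"
      using closed by (intro E.dsum_cong E.dsum_swap) auto
    finally show ?thesis .
  qed
  also have "\<dots> = lift (dmul (Mat n D) M N)"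
    unfolding lift_def using M N closed
    by (simp add: Mat_mul_entry R_morphism_dsum[OF f] E.dsum_mul_right[symmetric] f_closed
        g_matrix_unit_closed Mat_entry_closed cong: E.dsum_cong)
  finally show ?thesis by simp
qed

lemma lift_mono: "M \<in> dcar (Mat n D) \<Longrightarrow> N \<in> dcar (Mat n D) \<Longrightarrow> dleq (Mat n D) M N \<Longrightarrow>
    dleq E (lift M) (lift N)"
  unfolding dleq_def by (metis lift_add)

lemma lift_term_le:
  assumes M: "M \<in> dcar (Mat n D)" and ij: "i < n" "j < n" and x: "x \<in> dcar D" "le x (M i j)"
  shows "dleq E (dmul E (f x) (g (matrix_unit i j))) (lift M)"
proof -
  let ?t = "\<lambda>i j. dmul E (f (M i j)) (g (matrix_unit i j))"
  let ?row = "\<lambda>i. dsum E (?t i) n"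
  have closed: "dmul E (f x) (g (matrix_unit i j)) \<in> dcar E" "?t i j \<in> dcar E" "?row i \<in> dcar E"
    "lift M \<in> dcar E"
    using M ij x by (simp_all add: f_closed g_matrix_unit_closed lift_term_closed lift_closed)
  have "dleq E (dmul E (f x) (g (matrix_unit i j))) (?t i j)"
    using M ij x R_morphism_mono[OF f x(1) _ x(2)]
    by (intro E.mul_mono_right) (simp_all add: f_closed g_matrix_unit_closed Mat_entry_closed)
  moreover have "dleq E (?t i j) (?row i)"
    using M ij by (intro E.dsum_upper) (simp_all add: lift_term_closed)
  moreover have "dleq E (?row i) (lift M)"
    unfolding lift_def using M ij by (intro E.dsum_upper) (simp_all add: lift_term_closed)
  ultimately show ?thesis
    using E.le_trans[OF closed(1,2,3)] E.le_trans[OF closed(1,3,4)] by blast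
qed

lemma f_dsup_mul_le:
  assumes R: "R \<in> regsets D" and c: "c \<in> dcar E" and u: "u \<in> dcar E"
    and le: "\<And>x. x \<in> R \<Longrightarrow> dleq E (dmul E (f x) c) u"
  shows "dleq E (dmul E (f (dsup D R)) c) u"
proof -
  have fR: "f ` R \<in> regsets E" using R by (rule regsets_image[OF f])
  have c_regular: "{c} \<in> regsets E" using c by (rule regsets.reg_single)
  have "dmul E (f (dsup D R)) c = dsup E (setmul E (f ` R) {c})"
    using R c fR c_regular
    by (simp add: R_morphism_dsup[OF f] E.dsup_setmul E.dsup_eqI[OF E.is_sup_singleton])
  also have "dleq E \<dots> u"
    using E.is_sup_dsup[OF reg_mul[OF fR c_regular]] u
    by (rule E.is_sup_least) (auto simp: setmul_def intro: le)
  finally show ?thesis .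
qed

lemma lift_entrywise_dsup_least:
  assumes A: "A \<subseteq> dcar (Mat n D)" and R: "entrywise_cofinal A R"
    and u: "u \<in> dcar E" and upper: "\<And>M. M \<in> A \<Longrightarrow> dleq E (lift M) u"
  shows "dleq E (lift (entrywise_dsup R)) u"
  unfolding lift_def
proof (intro E.dsum_least u)
  have regular: "\<And>i j. R i j \<in> regsets D" using R by (rule entrywise_cofinal_regsets)
  fix i j assume ij: "i < n" "j < n"
  show "dleq E (dmul E (f (entrywise_dsup R i j)) (g (matrix_unit i j))) u"
    unfolding entrywise_dsup_def using ij
  proof (simp, intro f_dsup_mul_le regular g_matrix_unit_closed u)
    fix x assume x: "x \<in> R i j"
    obtain M where M: "M \<in> A" "le x (M i j)" using entrywise_cofinal_lower[OF R ij x] by blast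
    have closed: "x \<in> dcar D" "M \<in> dcar (Mat n D)"
      using x regsets_closed[OF regular] M(1) A by auto
    have "dleq E (dmul E (f x) (g (matrix_unit i j))) (lift M)"
      using closed(2) ij closed(1) M(2) by (rule lift_term_le)
    then show "dleq E (dmul E (f x) (g (matrix_unit i j))) u"
      using E.le_trans[OF _ lift_closed[OF closed(2)] u] upper[OF M(1)] closed ij
      by (simp add: f_closed g_matrix_unit_closed)
  qed
qed (use entrywise_dsup_closed[OF entrywise_cofinal_regsets[OF R]]
    in \<open>simp_all add: lift_term_closed\<close>)

lemma lift_dsup:
  assumes A: "A \<in> regsets (Mat n D)"
  shows "lift (dsup (Mat n D) A) = dsup E (lift ` A)"
proof (rule sym, rule E.dsup_eqI, rule E.is_supI)
  obtain R where R: "entrywise_cofinal A R" using entrywise_cofinal_exists[OF A] by blast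
  have A_closed: "A \<subseteq> dcar (Mat n D)" using A by (rule Mat.regsets_closed)
  have sup: "is_sup (Mat n D) A (entrywise_dsup R)" using A_closed R by (rule is_sup_entrywise_dsup)
  then have sup_eq: "dsup (Mat n D) A = entrywise_dsup R" by (rule Mat.dsup_eqI)
  have sup_closed: "entrywise_dsup R \<in> dcar (Mat n D)" using sup by (rule Mat.is_sup_closed)
  then show "lift (dsup (Mat n D) A) \<in> dcar E" unfolding sup_eq by (rule lift_closed)
  show "dleq E x (lift (dsup (Mat n D) A))" if "x \<in> lift ` A" for x
    using that A_closed sup_closed lift_mono Mat.is_sup_upper[OF sup] unfolding sup_eq by blast
  show "dleq E (lift (dsup (Mat n D) A)) u"
    if "u \<in> dcar E" "\<And>x. x \<in> lift ` A \<Longrightarrow> dleq E x u" for u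
    unfolding sup_eq using A_closed R that by (intro lift_entrywise_dsup_least) auto
qed

lemma R_morphism_lift: "R_morphism (Mat n D) E lift"
  unfolding R_morphism_def
  by (simp add: lift_closed lift_zero lift_unit lift_add lift_mul lift_dsup)

lemma lift_unique:
  assumes h: "R_morphism (Mat n D) E h" and h_scalar: "\<forall>x\<in>dcar D. h (scalar_mat n D x) = f x"
    and h_bool: "\<forall>y\<in>dcar (Mat n Bool_dioid). h (bool_mat n D y) = g y" and M: "M \<in> dcar (Mat n D)"
  shows "h M = lift M"
proof -
  let ?t = "\<lambda>i j. dmul (Mat n D) (scalar_mat n D (M i j)) (bool_mat n D (matrix_unit i j))"
  have closed: "\<And>i j. i < n \<Longrightarrow> j < n \<Longrightarrow> ?t i j \<in> dcar (Mat n D)"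
    using M by (intro Mat.mul_closed scalar_mat_closed bool_mat_closed) (simp add: Mat_entry_closed)
  have "h M = h (dsum (Mat n D) (\<lambda>i. dsum (Mat n D) (?t i) n) n)"
    using Mat_eq_dsum[OF M] by simp
  also have "\<dots> = dsum E (\<lambda>i. dsum E (\<lambda>j. h (?t i j)) n) n"
    using closed by (simp add: Mat.R_morphism_dsum[OF h] cong: E.dsum_cong)
  also have "\<dots> = lift M"
    unfolding lift_def using M h_scalar h_bool
    by (intro E.dsum_cong)
      (simp add: R_morphism_mul[OF h] scalar_mat_closed bool_mat_closed Mat_entry_closed
        matrix_unit_closed)
  finally show ?thesis .
qed

lemma unique_factorization:
  "\<exists>h. R_morphism (Mat n D) E h \<and> (\<forall>x\<in>dcar D. h (scalar_mat n D x) = f x) \<and>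
    (\<forall>y\<in>dcar (Mat n Bool_dioid). h (bool_mat n D y) = g y) \<and>
    (\<forall>h'. R_morphism (Mat n D) E h' \<and> (\<forall>x\<in>dcar D. h' (scalar_mat n D x) = f x) \<and>
      (\<forall>y\<in>dcar (Mat n Bool_dioid). h' (bool_mat n D y) = g y) \<longrightarrow>
      (\<forall>z\<in>dcar (Mat n D). h' z = h z))"
  using R_morphism_lift lift_scalar_mat lift_bool_mat lift_unique by blast

end

theorem proposition4:
  fixes K :: "'a dioid_struct" and n :: nat
  assumes "R_dioid K" and "n \<ge> 1"
  shows "is_R_tensor K (Mat n Bool_dioid) (Mat n K) (scalar_mat n K) (bool_mat n K)
           TYPE('c)"
proof -
  interpret matrix_r_dioid K n
    using assms(1) by (simp add: matrix_r_dioid_def r_dioidI)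
  have tensor_lift: "tensor_lift K n E f g"
    if "R_dioid E" "R_morphism K E f" "R_morphism (Mat n Bool_dioid) E g"
      "\<forall>x\<in>dcar K. \<forall>y\<in>dcar (Mat n Bool_dioid). dmul E (f x) (g y) = dmul E (g y) (f x)"
    for E :: "'c dioid_struct" and f g
    using that
    by (intro tensor_lift.intro tensor_lift_axioms.intro matrix_r_dioid_axioms r_dioidI) auto
  show ?thesis
    unfolding is_R_tensor_def
    using R_dioid_Mat R_morphism_scalar_mat R_morphism_bool_mat scalar_mat_bool_mat_commute
      tensor_lift.unique_factorization[OF tensor_lift]
    by auto
qed

end
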